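(* Let $(S,M)$ be a Coxeter matrix, $e=\{s_+,s_-\}$ with $m_{s_+,s_-}=3$, and assume condition (B) holds for a sequence $s_{j_0}=s_-,s_{j_1}=s_+,s_{j_2},\dots,s_{j_n}$ ($n\ge1$). Let $S'=S\setminus\{s_{j_n}\}$, let $W_{S'}\subseteq W_{S,M}$ be the subgroup generated by $S'$, and let $\mathrm{can}:W_{S'}\to W_{S,M}$ be the inclusion. Let $w=s_{j_1}s_{j_2}\cdots s_{j_n}\in W_{S,M}$ and $\tau_w:W_{S,M}\to W_{S,M}$, $x\mapsto wxw^{-1}$. Then the assignment \[ \tau(s)=s\ (s\in S'\setminus\{s_{j_0},\dots,s_{j_{n-1}}\}),\qquad \tau(s_{j_\ell})=s_{j_{\ell+1}}\ (1\le \ell\le n-1),\qquad \tau(s_{j_0})=s_0 \] extends to a group isomorphism $\tau:W_{S'}\to W_{S/e,N}$, and $\tau_w\circ\mathrm{can}=\phi\circ\tau$ as maps $W_{S'}\to W_{S,M}$, where $\phi:W_{S/e,N}\to W_{S,M}$ is the homomorphism with $\phi(s)=s$ for $s\in S\setminus\{s_\pm\}$ and $\phi(s_0)=s_+s_-s_+$.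
   Context: A Coxeter matrix on a nonempty set $S$ is a symmetric matrix $M=(m_{s,s'})_{s,s'\in S}$ with entries in $\mathbb Z_{\ge 1}\sqcup\{\infty\}$ such that $m_{s,s'}=1$ iff $s=s'$. The Coxeter group $W_{S,M}$ is generated by $S$ subject to $(ss')^{m_{s,s'}}=1$ whenever $m_{s,s'}\neq\infty$. Edge contraction: let $e=\{s_+,s_-\}\subseteq S$ with $s_+\ne s_-$ and $m_{s_+,s_-}=3$. Let $s_0$ be a new symbol and $S/e=(S\setminus\{s_+,s_-\})\sqcup\{s_0\}$. Define the symmetric matrix $N=(n_{s,s'})_{s,s'\in S/e}$ by $n_{s,s}=1$; $n_{s,s'}=m_{s,s'}$ for distinct $s,s'\in S\setminus\{s_+,s_-\}$; and for $s\in S\setminus\{s_+,s_-\}$: $n_{s,s_0}=n_{s_0,s}=m_{s,s_+}+m_{s,s_-}-2$ if $m_{s,s_+}=2$ or $m_{s,s_-}=2$ (with $\infty+k=\infty$), and $=\infty$ if both $m_{s,s_\pm}>2$. $W_{S/e,N}$ is the Coxeter group of $(S/e,N)$. Condition (B): there exist $n\ge1$ and pairwise distinct elements $s_{j_0}=s_-,\ s_{j_1}=s_+,\ s_{j_2},\dots,s_{j_n}$ of $S$ such that $m_{s_{j_k},s_{j_{k+1}}}=3$ for all $0\le k\le n-1$, and for every $1\le k\le n$ and every $s\in S$ with $s\ne s_{j_k}$, $s\neq s_{j_{k-1}}$ and (if $k<n$) $s\ne s_{j_{k+1}}$, one has $m_{s_{j_k},s}=2$. *)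

theory Defs
  imports "HOL-Algebra.Algebra" "HOL-Library.Extended_Nat"
begin

definition coxeter_matrix :: "'a set \<Rightarrow> ('a \<Rightarrow> 'a \<Rightarrow> enat) \<Rightarrow> bool" where
  "coxeter_matrix S M \<longleftrightarrow> S \<noteq> {} \<and>
     (\<forall>s\<in>S. \<forall>t\<in>S. M s t = M t s \<and> M s t \<ge> 1 \<and> (M s t = 1 \<longleftrightarrow> s = t))"

text \<open>The congruence on words over S generated by the Coxeter relations
  (s t)^m = 1 for m = M s t finite (for s = t this is s s = 1).\<close>
inductive cox_rel :: "'a set \<Rightarrow> ('a \<Rightarrow> 'a \<Rightarrow> enat) \<Rightarrow> 'a list \<Rightarrow> 'a list \<Rightarrow> bool"
  for S M where
  cox_refl: "set w \<subseteq> S \<Longrightarrow> cox_rel S M w w"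
| cox_sym: "cox_rel S M u v \<Longrightarrow> cox_rel S M v u"
| cox_trans: "cox_rel S M u v \<Longrightarrow> cox_rel S M v w \<Longrightarrow> cox_rel S M u w"
| cox_relator: "set u \<subseteq> S \<Longrightarrow> set v \<subseteq> S \<Longrightarrow> s \<in> S \<Longrightarrow> t \<in> S \<Longrightarrow> M s t = enat m \<Longrightarrow>
     cox_rel S M (u @ concat (replicate m [s, t]) @ v) (u @ v)"

definition cox_class :: "'a set \<Rightarrow> ('a \<Rightarrow> 'a \<Rightarrow> enat) \<Rightarrow> 'a list \<Rightarrow> 'a list set" where
  "cox_class S M w = {v. cox_rel S M w v}"

definition coxeter_group :: "'a set \<Rightarrow> ('a \<Rightarrow> 'a \<Rightarrow> enat) \<Rightarrow> 'a list set monoid" where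
  "coxeter_group S M =
     \<lparr> carrier = cox_class S M ` {w. set w \<subseteq> S},
       monoid.mult = (\<lambda>A B. {v. \<exists>a\<in>A. \<exists>b\<in>B. cox_rel S M (a @ b) v}),
       one = cox_class S M [] \<rparr>"

definition cox_gen :: "'a set \<Rightarrow> ('a \<Rightarrow> 'a \<Rightarrow> enat) \<Rightarrow> 'a \<Rightarrow> 'a list set" where
  "cox_gen S M s = cox_class S M [s]"

text \<open>Edge contraction. The new symbol s_0 is None; old symbols s are Some s.\<close>
definition contract_set :: "'a set \<Rightarrow> 'a \<Rightarrow> 'a \<Rightarrow> 'a option set" where
  "contract_set S sp sm = insert None (Some ` (S - {sp, sm}))"

definition contract_matrix :: "('a \<Rightarrow> 'a \<Rightarrow> enat) \<Rightarrow> 'a \<Rightarrow> 'a \<Rightarrow> 'a option \<Rightarrow> 'a option \<Rightarrow> enat" where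
  "contract_matrix M sp sm x y =
     (case (x, y) of
        (None, None) \<Rightarrow> 1
      | (Some s, Some t) \<Rightarrow> (if s = t then 1 else M s t)
      | (Some s, None) \<Rightarrow> (if M s sp = 2 \<or> M s sm = 2 then M s sp + M s sm - 2 else \<infinity>)
      | (None, Some s) \<Rightarrow> (if M s sp = 2 \<or> M s sm = 2 then M s sp + M s sm - 2 else \<infinity>))"

definition condition_B :: "'a set \<Rightarrow> ('a \<Rightarrow> 'a \<Rightarrow> enat) \<Rightarrow> 'a \<Rightarrow> 'a \<Rightarrow> nat \<Rightarrow> (nat \<Rightarrow> 'a) \<Rightarrow> bool" where
  "condition_B S M sp sm n j \<longleftrightarrow>
     n \<ge> 1 \<and> j 0 = sm \<and> j 1 = sp \<and> j ` {0..n} \<subseteq> S \<and> inj_on j {0..n} \<and>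
     (\<forall>k<n. M (j k) (j (k + 1)) = 3) \<and>
     (\<forall>k\<in>{1..n}. \<forall>s\<in>S. s \<noteq> j k \<and> s \<noteq> j (k - 1) \<and> (k < n \<longrightarrow> s \<noteq> j (k + 1))
                          \<longrightarrow> M (j k) s = 2)"

end

theory Submission
  imports Defs
begin

text \<open>Conjugation by w = s_(j 1) ... s_(j n) fixes every generator off the chain (condition (B)
  makes them commute with the chain), sends s_(j l) to s_(j (l+1)) for 1 \<le> l < n by the braid
  relations along the chain, and sends s_(j 0) = s_- to s_+ s_- s_+. These are exactly the images
  of the generators under phi \<circ> tau, so both sides agree. The relabelling of generators is a
  bijection S' \<rightarrow> S/e preserving the Coxeter matrix, so it induces tau once the subgroup of W
  generated by S' is known to be the Coxeter group of the restricted matrix: this is the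
  parabolic subgroup theorem, which follows from the exchange condition and the order of
  dihedral subgroups. Injectivity of tau then follows from the conjugation identity. The
  relations of N hold for the proposed images of phi because s_+ s_- s_+ is conjugate both to s_-
  (by s_+) and to s_+ (by s_-).\<close>

section \<open>Words modulo the Coxeter relations\<close>

lemma cox_rel_set: "cox_rel S M u v \<Longrightarrow> set u \<subseteq> S \<and> set v \<subseteq> S"
  by (induction rule: cox_rel.induct) auto

lemma cox_rel_context:
  assumes "cox_rel S M u v" "set p \<subseteq> S" "set q \<subseteq> S"
  shows "cox_rel S M (p @ u @ q) (p @ v @ q)"
  using assms
proof (induction rule: cox_rel.induct)
  case (cox_refl w) then show ?case by (intro cox_rel.cox_refl) auto
next
  case (cox_sym u v) then show ?case by (auto intro: cox_rel.cox_sym)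
next
  case (cox_trans u v w) then show ?case by (meson cox_rel.cox_trans)
next
  case (cox_relator u v s t m)
  have "cox_rel S M ((p @ u) @ concat (replicate m [s, t]) @ (v @ q)) ((p @ u) @ (v @ q))"
    using cox_relator by (intro cox_rel.cox_relator) auto
  then show ?case by simp
qed

lemma cox_rel_append:
  assumes "cox_rel S M u u'" "cox_rel S M v v'"
  shows "cox_rel S M (u @ v) (u' @ v')"
proof -
  have "cox_rel S M ([] @ u @ v) ([] @ u' @ v)"
    using assms cox_rel_set[OF assms(2)] by (intro cox_rel_context) auto
  moreover have "cox_rel S M (u' @ v @ []) (u' @ v' @ [])"
    using assms cox_rel_set[OF assms(1)] by (intro cox_rel_context) auto
  ultimately show ?thesis by (auto intro: cox_trans)
qed

lemma cox_rel_mono: "cox_rel J M u v \<Longrightarrow> J \<subseteq> K \<Longrightarrow> cox_rel K M u v"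
  by (induction rule: cox_rel.induct) (auto intro: cox_rel.intros)

lemma rev_concat_replicate: "rev (concat (replicate m [s, t])) = concat (replicate m [t, s])"
proof (induction m)
  case (Suc m)
  have "concat (replicate m [t, s]) @ [t, s] = [t, s] @ concat (replicate m [t, s])"
    by (induction m) auto
  with Suc show ?case by simp
qed simp

lemma cox_rel_rev:
  assumes "cox_rel S M u v" "\<And>s t. s \<in> S \<Longrightarrow> t \<in> S \<Longrightarrow> M s t = M t s"
  shows "cox_rel S M (rev u) (rev v)"
  using assms(1)
proof (induction rule: cox_rel.induct)
  case (cox_refl w) then show ?case by (intro cox_rel.cox_refl) auto
next
  case (cox_relator u v s t m)
  have "cox_rel S M (rev v @ concat (replicate m [t, s]) @ rev u) (rev v @ rev u)"
    using cox_relator assms(2) by (intro cox_rel.cox_relator) auto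
  then show ?case by (simp add: rev_concat_replicate)
qed (auto intro: cox_rel.intros)

lemma cox_rel_double:
  assumes "s \<in> S" "M s s = 1"
  shows "cox_rel S M [s, s] []"
  using cox_relator[where u="[]" and v="[]" and s=s and t=s and m=1 and S=S and M=M] assms
  by (simp add: one_enat_def)

lemma cox_rel_append_rev:
  assumes "set u \<subseteq> S" "\<forall>s\<in>S. M s s = 1"
  shows "cox_rel S M (u @ rev u) []"
  using assms(1)
proof (induction u)
  case (Cons a u)
  have "cox_rel S M ([a] @ (u @ rev u) @ [a]) ([a] @ [] @ [a])"
    using Cons by (intro cox_rel_context) auto
  moreover have "cox_rel S M [a, a] []" using Cons assms(2) by (intro cox_rel_double) auto
  ultimately show ?case by (auto intro: cox_trans)
qed (simp add: cox_refl)

lemma cox_rel_rev_append: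
  assumes "set u \<subseteq> S" "\<forall>s\<in>S. M s s = 1"
  shows "cox_rel S M (rev u @ u) []"
  using cox_rel_append_rev[of "rev u" S M] assms by simp

lemma cox_rel_cancel_left:
  assumes "cox_rel S M (p @ u) (p @ v)" "\<forall>s\<in>S. M s s = 1"
  shows "cox_rel S M u v"
proof -
  have s: "set p \<subseteq> S" "set u \<subseteq> S" "set v \<subseteq> S" using cox_rel_set[OF assms(1)] by auto
  note inv = cox_rel_rev_append[of p S M, OF s(1) assms(2)]
  have "cox_rel S M ((rev p @ p) @ u) ([] @ u)" "cox_rel S M ((rev p @ p) @ v) ([] @ v)"
    using s by (intro cox_rel_append[OF inv cox_refl]; simp)+
  moreover have "cox_rel S M (rev p @ (p @ u)) (rev p @ (p @ v))"
    using s by (intro cox_rel_append[OF cox_refl assms(1)]) auto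
  ultimately show ?thesis by (auto intro: cox_trans cox_sym)
qed

lemma cox_rel_cancel_right:
  assumes "cox_rel S M (u @ p) (v @ p)" "\<forall>s\<in>S. M s s = 1"
  shows "cox_rel S M u v"
proof -
  have s: "set p \<subseteq> S" "set u \<subseteq> S" "set v \<subseteq> S" using cox_rel_set[OF assms(1)] by auto
  note inv = cox_rel_append_rev[of p S M, OF s(1) assms(2)]
  have "cox_rel S M (u @ (p @ rev p)) (u @ [])" "cox_rel S M (v @ (p @ rev p)) (v @ [])"
    using s by (intro cox_rel_append[OF cox_refl inv]; simp)+
  moreover have "cox_rel S M ((u @ p) @ rev p) ((v @ p) @ rev p)"
    using s by (intro cox_rel_append[OF assms(1) cox_refl]) auto
  ultimately show ?thesis by (auto intro: cox_trans cox_sym)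
qed

lemma cox_class_eq: "cox_rel S M u v \<Longrightarrow> cox_class S M u = cox_class S M v"
  unfolding cox_class_def by (auto intro: cox_trans cox_sym)

lemma cox_class_eq_iff:
  assumes "set v \<subseteq> S"
  shows "cox_class S M u = cox_class S M v \<longleftrightarrow> cox_rel S M u v"
  using assms cox_class_eq[of S M u v] unfolding cox_class_def by (auto intro: cox_refl)

fun alt :: "'a \<Rightarrow> 'a \<Rightarrow> nat \<Rightarrow> 'a list" where
  "alt a b 0 = []"
| "alt a b (Suc k) = a # alt b a k"

lemma length_alt [simp]: "length (alt a b k) = k"
  by (induction k arbitrary: a b) auto

lemma set_alt: "set (alt a b k) \<subseteq> {a, b}"
  by (induction k arbitrary: a b) auto

lemma alt_add: "alt a b (i + k) = alt a b i @ (if even i then alt a b k else alt b a k)"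
  by (induction i arbitrary: a b) auto

lemma alt_snoc: "alt a b (Suc k) = alt a b k @ [if even k then a else b]"
  using alt_add[of a b k 1] by (auto simp: numeral_eq_Suc)

lemma rev_alt: "rev (alt a b k) = (if even k then alt b a k else alt a b k)"
proof (induction k arbitrary: a b)
  case (Suc k)
  have "rev (alt a b (Suc k)) = rev (alt b a k) @ [a]" by simp
  then show ?case using Suc[of b a] alt_snoc[of a b k] alt_snoc[of b a k]
    by (cases "even k") (simp_all del: alt.simps(2))
qed simp

lemma hd_rev_alt: "1 \<le> j \<Longrightarrow> hd (rev (alt q p j)) = (if even j then p else q)"
proof -
  assume j: "1 \<le> j"
  then obtain j' where "j = Suc j'" by (cases j) auto
  then show ?thesis unfolding rev_alt by simp
qed

lemma rev_alt_Suc: "rev (alt q p (Suc i)) = (if even i then q else p) # rev (alt q p i)"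
  using alt_snoc[of q p i] by simp

lemma concat_replicate_pair: "concat (replicate m [a, b]) = alt a b (2 * m)"
  by (induction m) auto

lemma cox_rel_braid:
  assumes "s \<in> S" "t \<in> S" "M s t = enat m" "\<forall>s\<in>S. M s s = 1"
  shows "cox_rel S M (alt s t m) (alt t s m)"
proof -
  have st: "set (alt s t m) \<subseteq> S" "set (alt t s m) \<subseteq> S"
    using set_alt[of s t m] set_alt[of t s m] assms by auto
  have "cox_rel S M ([] @ concat (replicate m [s, t]) @ []) ([] @ [])"
    using assms by (intro cox_relator) auto
  then have "cox_rel S M (alt s t m @ rev (alt t s m)) []"
    using alt_add[of s t m m] rev_alt[of t s m] by (simp add: concat_replicate_pair mult_2)
  then have "cox_rel S M ((alt s t m @ rev (alt t s m)) @ alt t s m) ([] @ alt t s m)"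
    using st by (intro cox_rel_append cox_refl) auto
  moreover have "cox_rel S M (alt s t m @ (rev (alt t s m) @ alt t s m)) (alt s t m @ [])"
    using st cox_rel_rev_append[of "alt t s m" S M, OF st(2) assms(4)] by (intro cox_rel_append cox_refl) auto
  ultimately show ?thesis by (auto intro: cox_trans cox_sym)
qed

lemma cox_rel_commute:
  assumes "s \<in> S" "t \<in> S" "M s t = 2" "\<forall>s\<in>S. M s s = 1"
  shows "cox_rel S M [s, t] [t, s]"
  using cox_rel_braid[of s S t M 2] assms by (simp add: numeral_eq_Suc numeral_eq_enat)

lemma cox_rel_braid_shift:
  assumes "s \<in> S" "t \<in> S" "cox_rel S M (alt s t m) (alt t s m)" "1 \<le> m" "\<forall>s\<in>S. M s s = 1"
  shows "cox_rel S M (alt s t (Suc m)) (alt t s (m - 1))"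
proof -
  define b where "b = (if even m then s else t)"
  have ts: "alt t s m = alt t s (m - 1) @ [b]"
    using alt_snoc[of t s "m - 1"] assms(4) unfolding b_def by (cases m) auto
  have sa: "set (alt t s (m - 1)) \<subseteq> S" "b \<in> S"
    using set_alt[of t s "m - 1"] assms(1,2) unfolding b_def by auto
  have "cox_rel S M (alt s t m @ [b]) (alt t s (m - 1) @ [b, b])"
    using cox_rel_append[OF assms(3) cox_refl, of "[b]"] sa unfolding ts by simp
  moreover have "cox_rel S M (alt t s (m - 1) @ [b, b]) (alt t s (m - 1) @ [])"
    using sa assms(5) by (intro cox_rel_append[OF cox_refl cox_rel_double]) auto
  ultimately show ?thesis unfolding alt_snoc[of s t m] b_def by (auto intro: cox_trans)
qed

lemma cox_rel_replicate:
  assumes "cox_rel S M A A'"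
  shows "cox_rel S M (concat (replicate m A)) (concat (replicate m A'))"
proof (induction m)
  case 0 then show ?case by (simp add: cox_refl)
next
  case (Suc m) then show ?case using assms by (simp add: cox_rel_append)
qed

lemma cox_rel_replicate_conj:
  assumes ps: "p \<in> S" "s \<in> S" "set c \<subseteq> S" and comm: "cox_rel S M [s, p] [p, s]" and diag: "\<forall>s\<in>S. M s s = 1"
  shows "cox_rel S M (concat (replicate m (s # p # c @ [p]))) (p # concat (replicate m (s # c)) @ [p])"
proof (induction m)
  case 0
  show ?case using cox_sym[OF cox_rel_double[of p S M]] ps diag by simp
next
  case (Suc m)
  let ?B = "concat (replicate m (s # c))"
  have sB: "set ?B \<subseteq> S" using ps by auto
  have "cox_rel S M ((s # p # c @ [p]) @ concat (replicate m (s # p # c @ [p])))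
                    ((s # p # c @ [p]) @ (p # ?B @ [p]))"
    using ps by (intro cox_rel_append[OF cox_refl Suc]) auto
  moreover have "cox_rel S M ([p, p] @ (?B @ [p])) ([] @ (?B @ [p]))"
    using ps sB diag by (intro cox_rel_append[OF cox_rel_double cox_refl]) auto
  then have "cox_rel S M (([s, p] @ c) @ ([p, p] @ ?B @ [p]) @ []) (([s, p] @ c) @ (?B @ [p]) @ [])"
    using ps by (intro cox_rel_context) auto
  moreover have "cox_rel S M ([s, p] @ (c @ ?B @ [p])) ([p, s] @ (c @ ?B @ [p]))"
    using ps sB by (intro cox_rel_append[OF comm cox_refl]) auto
  ultimately show ?case by (auto intro: cox_trans)
qed

lemma append_concat_replicate_swap: "B @ concat (replicate m (A @ B)) = concat (replicate m (B @ A)) @ B"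
  by (induction m) auto

lemma cox_rel_replicate_rotate:
  assumes "set A \<subseteq> S" "set B \<subseteq> S" "\<forall>s\<in>S. M s s = 1" "cox_rel S M (concat (replicate m (A @ B))) []"
  shows "cox_rel S M (concat (replicate m (B @ A))) []"
proof -
  let ?X = "concat (replicate m (B @ A))"
  have sX: "set ?X \<subseteq> S" using assms by auto
  have "cox_rel S M (?X @ (B @ rev B)) (?X @ [])"
    using cox_rel_append_rev[of B S M] assms sX by (intro cox_rel_append[OF cox_refl]) auto
  moreover have "?X @ (B @ rev B) = B @ concat (replicate m (A @ B)) @ rev B"
    using append_concat_replicate_swap[of B m A] by simp
  moreover have "cox_rel S M (B @ concat (replicate m (A @ B)) @ rev B) (B @ [] @ rev B)"
    using assms by (intro cox_rel_context) auto
  moreover have "cox_rel S M (B @ rev B) []" by (rule cox_rel_append_rev[of B S M, OF assms(2) assms(3)])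
  ultimately show ?thesis by (auto intro: cox_trans cox_sym)
qed

lemma cox_rel_conj_commuting:
  assumes "set P \<subseteq> S" "a \<in> S" "\<forall>s\<in>S. M s s = 1" "\<forall>p\<in>set P. M p a = 2"
  shows "cox_rel S M (P @ [a] @ rev P) [a]"
  using assms(1,4)
proof (induction P)
  case Nil then show ?case using assms by (simp add: cox_refl)
next
  case (Cons p P)
  have pS: "p \<in> S" using Cons by auto
  have "cox_rel S M ([p] @ (P @ [a] @ rev P) @ [p]) ([p] @ [a] @ [p])"
    using Cons pS by (intro cox_rel_context) auto
  moreover have "cox_rel S M ([p, a] @ [p]) ([a, p] @ [p])"
    using Cons pS assms by (intro cox_rel_append[OF cox_rel_commute cox_refl]) auto
  moreover have "cox_rel S M ([a] @ [p, p]) ([a] @ [])"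
    using pS assms by (intro cox_rel_append[OF cox_refl cox_rel_double]) auto
  ultimately show ?case by (auto intro: cox_trans)
qed

lemma cox_rel_braid3_conj:
  assumes "x \<in> S" "y \<in> S" "M x y = 3" "\<forall>s\<in>S. M s s = 1"
  shows "cox_rel S M [x, y, x, y, x] [y]"
proof -
  have "cox_rel S M [x, y, x] [y, x, y]"
    using cox_rel_braid[of x S y M 3] assms by (simp add: numeral_eq_Suc numeral_eq_enat)
  then have "cox_rel S M ([x, y, x] @ [y, x]) ([y, x, y] @ [y, x])"
    using assms by (intro cox_rel_append cox_refl) auto
  moreover have "cox_rel S M ([y, x] @ [y, y] @ [x]) ([y, x] @ [] @ [x])"
    using assms by (intro cox_rel_context cox_rel_double) auto
  moreover have "cox_rel S M ([y] @ [x, x]) ([y] @ [])"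
    using assms by (intro cox_rel_append[OF cox_refl cox_rel_double]) auto
  ultimately show ?thesis by (auto intro: cox_trans)
qed

lemma cox_rel_conj_relator:
  assumes "s \<in> S" "p \<in> S" "q \<in> S" "M s p = 2" "M s q = enat m" "\<forall>s\<in>S. M s s = 1"
  shows "cox_rel S M (concat (replicate m [s, p, q, p])) []"
proof -
  have "cox_rel S M [s, p] [p, s]" using assms by (intro cox_rel_commute) auto
  then have "cox_rel S M (concat (replicate m [s, p, q, p])) ([p] @ concat (replicate m [s, q]) @ [p])"
    using cox_rel_replicate_conj[of p S s "[q]" M m] assms by simp
  moreover have "cox_rel S M ([p] @ concat (replicate m [s, q]) @ [p]) ([p] @ [] @ [p])"
    using assms cox_rel.cox_relator[of "[]" S "[]" s q M m]
    by (intro cox_rel_context) auto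
  moreover have "cox_rel S M [p, p] []" using assms by (intro cox_rel_double) auto
  ultimately show ?thesis by (auto intro: cox_trans)
qed

section \<open>Reflections and the exchange condition\<close>

text \<open>For a word x = x0 x1 ... xk, the word refl_word x i represents the reflection
  xk ... x(i+1) xi x(i+1) ... xk. The set of reflections occurring an odd number of times in
  refl_classes depends only on the element represented by x (Bourbaki's reflection cocycle);
  this yields the exchange condition.\<close>

definition refl_word :: "'a list \<Rightarrow> nat \<Rightarrow> 'a list" where
  "refl_word x i = rev (drop (Suc i) x) @ x ! i # drop (Suc i) x"

definition refl_classes :: "'a set \<Rightarrow> ('a \<Rightarrow> 'a \<Rightarrow> enat) \<Rightarrow> 'a list \<Rightarrow> 'a list set list" where
  "refl_classes S M x = map (\<lambda>i. cox_class S M (refl_word x i)) [0..<length x]"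

definition odd_refls :: "'a set \<Rightarrow> ('a \<Rightarrow> 'a \<Rightarrow> enat) \<Rightarrow> 'a list \<Rightarrow> 'a list set set" where
  "odd_refls S M x = {c. odd (count (mset (refl_classes S M x)) c)}"

definition reduced :: "'a set \<Rightarrow> ('a \<Rightarrow> 'a \<Rightarrow> enat) \<Rightarrow> 'a list \<Rightarrow> bool" where
  "reduced S M x \<longleftrightarrow> set x \<subseteq> S \<and> (\<forall>v. cox_rel S M x v \<longrightarrow> length x \<le> length v)"

lemma set_refl_word: "i < length x \<Longrightarrow> set (refl_word x i) \<subseteq> set x"
  unfolding refl_word_def by (auto dest: in_set_dropD)

lemma refl_word_append_left: "i < length u \<Longrightarrow> refl_word (u @ v) i = rev v @ refl_word u i @ v"
  unfolding refl_word_def by (simp add: nth_append)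

lemma refl_word_append_right: "length u \<le> k \<Longrightarrow> refl_word (u @ v) k = refl_word v (k - length u)"
  unfolding refl_word_def by (simp add: nth_append Suc_diff_le)

lemma refl_classes_append:
  "refl_classes S M (u @ v) =
     map (\<lambda>i. cox_class S M (rev v @ refl_word u i @ v)) [0..<length u] @ refl_classes S M v"
  unfolding refl_classes_def
  by (rule nth_equalityI) (auto simp: nth_append refl_word_append_left refl_word_append_right)

lemma refl_word_split_first:
  "refl_word (A @ a # B @ b # C) (length A) = rev C @ b # rev B @ a # B @ b # C"
  unfolding refl_word_def by (simp add: nth_append)

lemma refl_word_split_second:
  "refl_word (A @ a # B @ b # C) (length A + Suc (length B)) = rev C @ b # C"
  using refl_word_append_right[of "A @ a # B" "length A + Suc (length B)" "b # C"]
  by (simp add: refl_word_def)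

lemma split_at_two_positions:
  assumes "i < k" "k < length x"
  obtains A a B b C where "x = A @ a # B @ b # C" "length A = i" "length A + Suc (length B) = k"
proof -
  let ?y = "drop (Suc i) x"
  have "x = take i x @ x ! i # ?y" using assms by (simp add: id_take_nth_drop)
  moreover have "?y = take (k - Suc i) ?y @ x ! k # drop (Suc k) x"
    using id_take_nth_drop[of "k - Suc i" ?y] assms by simp
  ultimately have "x = take i x @ x ! i # take (k - Suc i) ?y @ x ! k # drop (Suc k) x" by simp
  then show ?thesis
    using assms by (intro that[of "take i x" "x ! i" "take (k - Suc i) ?y" "x ! k" "drop (Suc k) x"]) auto
qed

lemma map_upt_double:
  assumes "\<And>i. i < m \<Longrightarrow> f (i + m) = f i"
  shows "map f [0..<2 * m] = map f [0..<m] @ map f [0..<m]"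
proof (rule nth_equalityI)
  fix k assume "k < length (map f [0..<2 * m])"
  then show "map f [0..<2 * m] ! k = (map f [0..<m] @ map f [0..<m]) ! k"
    using assms[of "k - m"] by (auto simp: nth_append)
qed auto

lemma alt_Suc_split:
  assumes "1 \<le> m"
  shows "alt a c (Suc m) = a # alt c a (m - 1) @ [if even m then a else c]"
  using assms alt_snoc[of c a "m - 1"] by (cases m) auto

lemma alt_double_split:
  assumes "i < m"
  obtains a c Y where "alt s t (2 * m) = alt s t i @ alt a c (Suc m) @ Y" "{a, c} = {s, t}"
proof -
  have e: "2 * m = i + (Suc m + (m - Suc i))" using assms by simp
  show ?thesis
  proof (cases "even i")
    case True
    then show ?thesis using that[of s t] unfolding e alt_add[of s t i] alt_add[of s t "Suc m"] by simp
  next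
    case False
    then show ?thesis using that[of t s] unfolding e alt_add[of s t i] alt_add[of t s "Suc m"] by auto
  qed
qed

locale coxeter_system =
  fixes S :: "'a set" and M :: "'a \<Rightarrow> 'a \<Rightarrow> enat"
  assumes coxeter: "coxeter_matrix S M"
begin

lemma diag: "\<forall>s\<in>S. M s s = 1"
  using coxeter unfolding coxeter_matrix_def by auto

lemma symm: "s \<in> S \<Longrightarrow> t \<in> S \<Longrightarrow> M s t = M t s"
  using coxeter unfolding coxeter_matrix_def by auto

lemma matrix_ge_2:
  assumes "s \<in> S" "t \<in> S" "s \<noteq> t" "M s t = enat m"
  shows "2 \<le> m"
proof -
  have "M s t \<ge> 1" "M s t \<noteq> 1" using coxeter assms(1-3) unfolding coxeter_matrix_def by blast+
  then show ?thesis unfolding assms(4) by (auto simp: one_enat_def)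
qed

lemma refl_word_braid_periodic:
  assumes "s \<in> S" "t \<in> S" "M s t = enat m" "i < m"
  shows "cox_rel S M (refl_word (alt s t (2 * m)) i) (refl_word (alt s t (2 * m)) (i + m))"
proof -
  obtain a c Y where d: "alt s t (2 * m) = alt s t i @ alt a c (Suc m) @ Y" and ac: "{a, c} = {s, t}"
    by (rule alt_double_split[OF assms(4)])
  have acS: "a \<in> S" "c \<in> S" using ac assms(1,2) by auto
  have "cox_rel S M (alt a c m) (alt c a m)"
    using ac cox_rel_braid[OF assms(1-3) diag] by (auto simp: doubleton_eq_iff intro: cox_sym)
  then have shift: "cox_rel S M (alt a c (Suc m)) (alt c a (m - 1))"
    using cox_rel_braid_shift[of a S c M m, OF acS _ _ diag] assms(4) by simp
  define A B b where "A = alt s t i" and "B = alt c a (m - 1)" and "b = (if even m then a else c)"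
  have dec: "alt a c (Suc m) = a # B @ [b]" unfolding B_def b_def using assms(4) by (intro alt_Suc_split) simp
  have d2: "alt s t (2 * m) = A @ a # B @ b # Y" using d unfolding dec A_def by simp
  have len: "length A = i" "length A + Suc (length B) = i + m" using assms(4) unfolding A_def B_def by auto
  have "set (alt s t (2 * m)) \<subseteq> S" using set_alt[of s t "2*m"] assms by auto
  then have sY: "set Y \<subseteq> S" "set B \<subseteq> S" "b \<in> S" unfolding d2 by auto
  have "cox_rel S M (rev B @ (a # B @ [b])) (rev B @ B)"
    using sY by (intro cox_rel_append[OF cox_refl shift[unfolded dec B_def[symmetric]]]) auto
  then have "cox_rel S M (rev B @ a # B @ [b]) []"
    using cox_rel_rev_append[of B S M, OF sY(2) diag] by (auto intro: cox_trans)
  then have "cox_rel S M ((rev Y @ [b]) @ (rev B @ a # B @ [b]) @ Y) ((rev Y @ [b]) @ [] @ Y)"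
    using sY by (intro cox_rel_context) auto
  moreover have "refl_word (alt s t (2 * m)) i = rev Y @ b # rev B @ a # B @ b # Y"
    unfolding d2 len(1)[symmetric] by (rule refl_word_split_first)
  moreover have "refl_word (alt s t (2 * m)) (i + m) = rev Y @ b # Y"
    unfolding d2 len(2)[symmetric] by (rule refl_word_split_second)
  ultimately show ?thesis by simp
qed

lemma refl_classes_relator_even:
  assumes "s \<in> S" "t \<in> S" "M s t = enat m" "set q \<subseteq> S"
  shows "even (count (mset (map (\<lambda>i. cox_class S M (rev q @ refl_word (alt s t (2 * m)) i @ q))
                                [0..<2 * m])) c)"
proof -
  let ?f = "\<lambda>i. cox_class S M (rev q @ refl_word (alt s t (2 * m)) i @ q)"
  have "?f (i + m) = ?f i" if "i < m" for i
    using assms(4)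
    by (intro cox_class_eq[OF cox_sym] cox_rel_context refl_word_braid_periodic[OF assms(1-3) that]) auto
  then have "map ?f [0..<2 * m] = map ?f [0..<m] @ map ?f [0..<m]" by (rule map_upt_double)
  then show ?thesis by simp
qed

lemma odd_refls_cong: "cox_rel S M u v \<Longrightarrow> odd_refls S M u = odd_refls S M v"
proof (induction rule: cox_rel.induct)
  case (cox_relator u v s t m)
  let ?rel = "alt s t (2 * m)"
  have rel: "concat (replicate m [s, t]) = ?rel" by (simp add: concat_replicate_pair)
  have rr: "cox_rel S M ?rel []"
    using cox_rel.cox_relator[of "[]" S "[]" s t M m] cox_relator rel by simp
  have rrr: "cox_rel S M (rev ?rel) []"
    using cox_rel_rev[OF rr] symm by simp
  have prefix: "map (\<lambda>i. cox_class S M (rev (?rel @ v) @ refl_word u i @ ?rel @ v)) [0..<length u]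
      = map (\<lambda>i. cox_class S M (rev v @ refl_word u i @ v)) [0..<length u]"
  proof (rule map_cong[OF refl])
    fix i assume "i \<in> set [0..<length u]"
    then have "set (refl_word u i) \<subseteq> S" using set_refl_word cox_relator by fastforce
    then have "cox_rel S M (rev v @ (rev ?rel @ refl_word u i @ ?rel) @ v) (rev v @ ([] @ refl_word u i @ []) @ v)"
      using cox_relator
      by (intro cox_rel_context cox_rel_append[OF rrr cox_rel_append[OF cox_refl rr]]) auto
    then show "cox_class S M (rev (?rel @ v) @ refl_word u i @ ?rel @ v) = cox_class S M (rev v @ refl_word u i @ v)"
      by (simp add: cox_class_eq)
  qed
  have "refl_classes S M (u @ ?rel @ v) =
      map (\<lambda>i. cox_class S M (rev v @ refl_word u i @ v)) [0..<length u]
      @ map (\<lambda>i. cox_class S M (rev v @ refl_word ?rel i @ v)) [0..<2 * m] @ refl_classes S M v"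
    using prefix by (simp add: refl_classes_append)
  moreover have "refl_classes S M (u @ v) =
      map (\<lambda>i. cox_class S M (rev v @ refl_word u i @ v)) [0..<length u] @ refl_classes S M v"
    by (simp add: refl_classes_append)
  moreover have "even (count (mset (map (\<lambda>i. cox_class S M (rev v @ refl_word ?rel i @ v)) [0..<2 * m])) c)" for c
    using refl_classes_relator_even cox_relator by auto
  ultimately show ?case unfolding odd_refls_def rel by (intro Collect_cong) simp
qed simp_all

lemma card_odd_refls_le: "card (odd_refls S M x) \<le> length x"
proof -
  have "odd_refls S M x \<subseteq> set (refl_classes S M x)"
  proof
    fix c assume "c \<in> odd_refls S M x"
    then have "0 < count (mset (refl_classes S M x)) c"
      unfolding odd_refls_def by (cases "count (mset (refl_classes S M x)) c") auto
    then show "c \<in> set (refl_classes S M x)" by simp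
  qed
  then have "card (odd_refls S M x) \<le> card (set (refl_classes S M x))" by (intro card_mono) auto
  also have "\<dots> \<le> length (refl_classes S M x)" by (rule card_length)
  finally show ?thesis by (simp add: refl_classes_def)
qed

lemma card_odd_refls_distinct:
  assumes "distinct (refl_classes S M x)"
  shows "card (odd_refls S M x) = length x"
proof -
  have "odd_refls S M x = set (refl_classes S M x)"
    using assms unfolding odd_refls_def by (auto simp: distinct_count_atmost_1 count_eq_zero_iff[symmetric])
  then show ?thesis using assms distinct_card by (fastforce simp: refl_classes_def)
qed

lemma cox_rel_delete_pair:
  assumes "set (A @ a # B @ b # C) \<subseteq> S"
    and "cox_rel S M (refl_word (A @ a # B @ b # C) (length A))
                     (refl_word (A @ a # B @ b # C) (length A + Suc (length B)))"
  shows "cox_rel S M (A @ a # B @ b # C) (A @ B @ C)"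
proof -
  have s: "set A \<subseteq> S" "a \<in> S" "set B \<subseteq> S" "b \<in> S" "set C \<subseteq> S" using assms(1) by auto
  have "cox_rel S M ((rev C @ [b]) @ (rev B @ a # B @ [b]) @ C) ((rev C @ [b]) @ [] @ C)"
    using assms(2) unfolding refl_word_split_first refl_word_split_second by simp
  then have "cox_rel S M ((rev B @ a # B @ [b]) @ C) ([] @ C)"
    using cox_rel_cancel_left diag by blast
  then have "cox_rel S M (rev B @ a # B @ [b]) []"
    using cox_rel_cancel_right diag by blast
  then have "cox_rel S M (B @ (rev B @ a # B @ [b])) (B @ [])"
    using s by (intro cox_rel_append[OF cox_refl]) auto
  moreover have "cox_rel S M ((B @ rev B) @ (a # B @ [b])) ([] @ (a # B @ [b]))"
    using s cox_rel_append_rev[of B S M] diag by (intro cox_rel_append cox_refl) auto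
  ultimately have "cox_rel S M (a # B @ [b]) B" by (auto intro: cox_trans cox_sym)
  then have "cox_rel S M (A @ (a # B @ [b]) @ C) (A @ B @ C)"
    using s by (intro cox_rel_context) auto
  then show ?thesis by simp
qed

lemma not_reduced_refl_repeat:
  assumes "set x \<subseteq> S" "\<not> reduced S M x"
  obtains i k where "i < k" "k < length x" "cox_rel S M (refl_word x i) (refl_word x k)"
proof -
  obtain v where v: "cox_rel S M x v" "length v < length x"
    using assms unfolding reduced_def by auto
  have "card (odd_refls S M x) < length x"
    using odd_refls_cong[OF v(1)] card_odd_refls_le[of v] v(2) by simp
  then have "\<not> distinct (refl_classes S M x)" using card_odd_refls_distinct by fastforce
  then obtain i k where ik: "i < length x" "k < length x" "i \<noteq> k"
    "cox_class S M (refl_word x i) = cox_class S M (refl_word x k)"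
    unfolding distinct_conv_nth refl_classes_def by auto
  have "set (refl_word x k) \<subseteq> S" using set_refl_word ik assms by blast
  then have r: "cox_rel S M (refl_word x i) (refl_word x k)" using ik cox_class_eq_iff by blast
  show ?thesis
  proof (cases "i < k")
    case False
    then show ?thesis using ik that[of k i] cox_sym[OF r] by auto
  qed (use ik r that in auto)
qed

lemma reduced_refls_distinct:
  assumes "reduced S M x" "i < k" "k < length x"
  shows "\<not> cox_rel S M (refl_word x i) (refl_word x k)"
proof
  assume r: "cox_rel S M (refl_word x i) (refl_word x k)"
  obtain A a B b C where x: "x = A @ a # B @ b # C" "length A = i" "length A + Suc (length B) = k"
    using split_at_two_positions[OF assms(2,3)] .
  have "cox_rel S M x (A @ B @ C)"
    using cox_rel_delete_pair[of A a B b C] r x assms(1) unfolding reduced_def by auto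
  then show False using assms(1) x unfolding reduced_def by fastforce
qed

lemma exchange_condition:
  assumes "reduced S M y" "s \<in> S" "\<not> reduced S M (s # y)"
  obtains B b C where "y = B @ b # C" "cox_rel S M (s # y) (B @ C)"
proof -
  have sy: "set (s # y) \<subseteq> S" using assms unfolding reduced_def by auto
  obtain i k where ik: "i < k" "k < length (s # y)" "cox_rel S M (refl_word (s # y) i) (refl_word (s # y) k)"
    using not_reduced_refl_repeat[OF sy assms(3)] .
  show ?thesis
  proof (cases i)
    case 0
    obtain A a B b C where x: "s # y = A @ a # B @ b # C" "length A = i" "length A + Suc (length B) = k"
      using split_at_two_positions[OF ik(1,2)] .
    then have "A = []" "a = s" "y = B @ b # C" using 0 by auto
    then show ?thesis using that cox_rel_delete_pair[of A a B b C] x ik sy by auto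
  next
    case (Suc i')
    have "refl_word (s # y) i = refl_word y i'" "refl_word (s # y) k = refl_word y (k - 1)"
      using refl_word_append_right[of "[s]" _ y] Suc ik by auto
    then show ?thesis using reduced_refls_distinct[OF assms(1), of i' "k - 1"] ik Suc by auto
  qed
qed

end

section \<open>Dihedral subgroups\<close>

text \<open>The order of s t in W is at least m(s,t). This comes from Tits' geometric
  representation: generator s acts on real functions on S by
  phi \<mapsto> phi - 2 phi(s) B(s,-), with B(s,t) = -cos(pi/m(s,t)) and B(s,t) = -1 if m(s,t) = \<infinity>.
  For finite m(s,t), s t acts on the coordinates at s and t as a rotation by 2 pi/m(s,t).\<close>

lemma rotation_step_complex:
  fixes \<theta> :: real and c :: real
  assumes "c = - cos \<theta>"
  shows "complex_of_real (- a + 2 * c * b) + cis \<theta> * complex_of_real (- 2 * c * a + (4 * c * c - 1) * b)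
       = cis \<theta> ^ 2 * (complex_of_real a + cis \<theta> * complex_of_real b)"
proof -
  define w where "w = cis \<theta>"
  have w0: "w \<noteq> 0" unfolding w_def by simp
  have cw: "complex_of_real c = - (w + inverse w) / 2"
    unfolding w_def assms by (simp add: complex_eq_iff)
  have "complex_of_real (- a + 2 * c * b) + w * complex_of_real (- 2 * c * a + (4 * c * c - 1) * b)
       = w ^ 2 * (complex_of_real a + w * complex_of_real b)"
    unfolding of_real_add of_real_mult of_real_minus of_real_diff of_real_numeral of_real_1 cw using w0
    by (simp add: field_simps) (simp add: algebra_simps power2_eq_square power3_eq_cube)
  then show ?thesis unfolding w_def .
qed

lemma complex_combination_inj:
  assumes "sin \<theta> \<noteq> 0"
    and "complex_of_real a + cis \<theta> * complex_of_real b = complex_of_real a' + cis \<theta> * complex_of_real b'"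
  shows "a = a' \<and> b = b'"
proof -
  have "Im (complex_of_real a + cis \<theta> * complex_of_real b) = Im (complex_of_real a' + cis \<theta> * complex_of_real b')"
    using assms(2) by simp
  then have "sin \<theta> * b = sin \<theta> * b'" by simp
  then have bb: "b = b'" using assms(1) by simp
  have "Re (complex_of_real a + cis \<theta> * complex_of_real b) = Re (complex_of_real a' + cis \<theta> * complex_of_real b')"
    using assms(2) by simp
  then have "a + cos \<theta> * b = a' + cos \<theta> * b'" by simp
  then show ?thesis using bb by simp
qed

context coxeter_system
begin

definition cform :: "'a \<Rightarrow> 'a \<Rightarrow> real" where
  "cform s u = (if s = u then 1 else (case M s u of enat m \<Rightarrow> - cos (pi / real m) | \<infinity> \<Rightarrow> -1))"

definition geom_refl :: "'a \<Rightarrow> ('a \<Rightarrow> real) \<Rightarrow> ('a \<Rightarrow> real)" where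
  "geom_refl s \<phi> = (\<lambda>u. \<phi> u - 2 * cform s u * \<phi> s)"

definition geom_rot :: "'a \<Rightarrow> 'a \<Rightarrow> ('a \<Rightarrow> real) \<Rightarrow> ('a \<Rightarrow> real)" where
  "geom_rot s t \<phi> = geom_refl s (geom_refl t \<phi>)"

fun geom_word :: "'a list \<Rightarrow> ('a \<Rightarrow> real) \<Rightarrow> ('a \<Rightarrow> real)" where
  "geom_word [] = id"
| "geom_word (s # w) = geom_refl s \<circ> geom_word w"

lemma geom_word_append: "geom_word (u @ v) = geom_word u \<circ> geom_word v"
  by (induction u) auto

lemma geom_word_alt: "geom_word (alt s t (2 * k)) = geom_rot s t ^^ k"
proof (induction k)
  case 0 then show ?case by simp
next
  case (Suc k)
  have "alt s t (2 * Suc k) = s # t # alt s t (2 * k)" by (simp add: numeral_eq_Suc)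
  then have "geom_word (alt s t (2 * Suc k)) = geom_rot s t \<circ> geom_word (alt s t (2 * k))" by (auto simp: fun_eq_iff geom_rot_def)
  then show ?case using Suc by (simp add: funpow_Suc_right del: funpow.simps) (simp add: funpow_swap1)
qed

lemma cform_self[simp]: "cform s s = 1" by (simp add: cform_def)

lemma cform_sym: "s \<in> S \<Longrightarrow> u \<in> S \<Longrightarrow> cform s u = cform u s"
  unfolding cform_def using symm by auto

lemma geom_refl_involutive: "geom_refl s (geom_refl s \<phi>) = \<phi>"
  unfolding geom_refl_def by (rule ext) (simp add: algebra_simps)

lemma geom_rot_apply_first:
  "(geom_rot s t \<phi>) s = - \<phi> s + 2 * cform t s * \<phi> t"
  unfolding geom_rot_def geom_refl_def by (simp add: algebra_simps)

lemma geom_rot_apply_second: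
  assumes "s \<noteq> t"
  shows "(geom_rot s t \<phi>) t = - 2 * cform s t * \<phi> s + (4 * cform s t * cform t s - 1) * \<phi> t"
  unfolding geom_rot_def geom_refl_def using assms by (simp add: algebra_simps)

lemma geom_rot_apply_other:
  "(geom_rot s t \<phi>) u = \<phi> u - 2 * cform t u * \<phi> t - 2 * cform s u * (\<phi> s - 2 * cform t s * \<phi> t)"
  unfolding geom_rot_def geom_refl_def by (simp add: algebra_simps)

lemma geom_rot_pow_complex:
  assumes "s \<noteq> t" "s \<in> S" "t \<in> S" "cform s t = - cos \<theta>"
  shows "complex_of_real ((geom_rot s t ^^ k) \<phi> s) + cis \<theta> * complex_of_real ((geom_rot s t ^^ k) \<phi> t)
       = cis \<theta> ^ (2 * k) * (complex_of_real (\<phi> s) + cis \<theta> * complex_of_real (\<phi> t))"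
proof (induction k)
  case 0 then show ?case by simp
next
  case (Suc k)
  define \<psi> where "\<psi> = (geom_rot s t ^^ k) \<phi>"
  have bts: "cform t s = - cos \<theta>" using assms cform_sym by simp
  have e: "(geom_rot s t ^^ Suc k) \<phi> = geom_rot s t \<psi>" unfolding \<psi>_def by simp
  have "complex_of_real (geom_rot s t \<psi> s) + cis \<theta> * complex_of_real (geom_rot s t \<psi> t)
      = cis \<theta> ^ 2 * (complex_of_real (\<psi> s) + cis \<theta> * complex_of_real (\<psi> t))"
    unfolding geom_rot_apply_first geom_rot_apply_second[OF assms(1)] bts assms(4) using rotation_step_complex[of "- cos \<theta>" \<theta> "\<psi> s" "\<psi> t"] by simp
  also have "\<dots> = cis \<theta> ^ 2 * (cis \<theta> ^ (2 * k) * (complex_of_real (\<phi> s) + cis \<theta> * complex_of_real (\<phi> t)))"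
    using Suc unfolding \<psi>_def by simp
  also have "\<dots> = cis \<theta> ^ (2 * Suc k) * (complex_of_real (\<phi> s) + cis \<theta> * complex_of_real (\<phi> t))"
    by (simp add: power_add[symmetric] power2_eq_square)
  finally show ?case unfolding e .
qed

text \<open>For u different from s and t, this linear combination is fixed by s t; it recovers
  phi(u) from phi(s) and phi(t) once 1 - B(s,t)^2 is nonzero.\<close>

lemma geom_rot_invariant_step:
  assumes "s \<noteq> t" "s \<in> S" "t \<in> S" "u \<noteq> s" "u \<noteq> t"
  defines "c \<equiv> cform s t" and "bs \<equiv> cform s u" and "bt \<equiv> cform t u"
  shows "(1 - c * c) * (geom_rot s t \<phi>) u - (bs - c * bt) * (geom_rot s t \<phi>) s
           - (bt - c * bs) * (geom_rot s t \<phi>) t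
       = (1 - c * c) * \<phi> u - (bs - c * bt) * \<phi> s - (bt - c * bs) * \<phi> t"
proof -
  have bts: "cform t s = c" unfolding c_def using assms cform_sym by simp
  show ?thesis unfolding geom_rot_apply_first geom_rot_apply_second[OF assms(1)] geom_rot_apply_other bts
    by (simp add: c_def[symmetric] bs_def[symmetric] bt_def[symmetric] algebra_simps)
qed

lemma geom_rot_pow_invariant:
  assumes "s \<noteq> t" "s \<in> S" "t \<in> S" "u \<noteq> s" "u \<noteq> t"
  defines "c \<equiv> cform s t" and "bs \<equiv> cform s u" and "bt \<equiv> cform t u"
  shows "(1 - c * c) * ((geom_rot s t ^^ k) \<phi>) u - (bs - c * bt) * ((geom_rot s t ^^ k) \<phi>) s
           - (bt - c * bs) * ((geom_rot s t ^^ k) \<phi>) t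
       = (1 - c * c) * \<phi> u - (bs - c * bt) * \<phi> s - (bt - c * bs) * \<phi> t"
proof (induction k)
  case 0 then show ?case by simp
next
  case (Suc k)
  show ?case using geom_rot_invariant_step[OF assms(1-5), of "(geom_rot s t ^^ k) \<phi>"] Suc
    unfolding c_def bs_def bt_def by simp
qed

lemma finite_braid_angle:
  assumes "s \<in> S" "t \<in> S" "s \<noteq> t" "M s t = enat m"
  shows "2 \<le> m" "cform s t = - cos (pi / real m)" "sin (pi / real m) > 0"
proof -
  show m2: "2 \<le> m" using matrix_ge_2 assms by blast
  show "cform s t = - cos (pi / real m)" using assms unfolding cform_def by simp
  have "pi / real m < pi" using m2 pi_gt_zero by (simp add: divide_less_eq)
  moreover have "0 < pi / real m" using m2 by simp
  ultimately show "sin (pi / real m) > 0" by (rule sin_gt_zero[rotated])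
qed

lemma geom_rot_pow_order:
  assumes "s \<in> S" "t \<in> S" "s \<noteq> t" "M s t = enat m"
  shows "geom_rot s t ^^ m = id"
proof
  fix \<phi>
  define \<theta> where "\<theta> = pi / real m"
  note fs = finite_braid_angle[OF assms, folded \<theta>_def]
  define \<psi> where "\<psi> = (geom_rot s t ^^ m) \<phi>"
  have w: "cis \<theta> ^ (2 * m) = 1"
    unfolding DeMoivre \<theta>_def using fs(1) by simp
  have "complex_of_real (\<psi> s) + cis \<theta> * complex_of_real (\<psi> t) = complex_of_real (\<phi> s) + cis \<theta> * complex_of_real (\<phi> t)"
    unfolding \<psi>_def geom_rot_pow_complex[OF assms(3,1,2) fs(2)] w by simp
  then have st: "\<psi> s = \<phi> s" "\<psi> t = \<phi> t" using complex_combination_inj fs(3) by (metis less_irrefl)+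
  show "\<psi> = id \<phi>"
  proof
    fix u
    show "\<psi> u = id \<phi> u"
    proof (cases "u = s \<or> u = t")
      case True then show ?thesis using st by auto
    next
      case False
      define c where "c = cform s t"
      have "c * c < 1"
      proof -
        have "c * c = (cos \<theta>)\<^sup>2" unfolding c_def fs(2) by (simp add: power2_eq_square)
        also have "\<dots> = 1 - (sin \<theta>)\<^sup>2" by (simp add: cos_squared_eq)
        finally show ?thesis using fs(3) by simp
      qed
      then have d: "1 - c * c \<noteq> 0" by simp
      have "(1 - c * c) * \<psi> u = (1 - c * c) * \<phi> u"
        using geom_rot_pow_invariant[OF assms(3,1,2), of u m \<phi>] False st unfolding \<psi>_def c_def by auto
      then show ?thesis using d by simp
    qed
  qed
qed

lemma geom_rot_pow_ne_id_finite:
  assumes "s \<in> S" "t \<in> S" "s \<noteq> t" "M s t = enat m" "0 < k" "k < m"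
  shows "geom_rot s t ^^ k \<noteq> id"
proof
  assume G: "geom_rot s t ^^ k = id"
  define \<theta> where "\<theta> = pi / real m"
  note fs = finite_braid_angle[OF assms(1-4), folded \<theta>_def]
  define \<phi> :: "'a \<Rightarrow> real" where "\<phi> = (\<lambda>u. if u = s then 1 else 0)"
  have "complex_of_real (\<phi> s) + cis \<theta> * complex_of_real (\<phi> t)
        = cis \<theta> ^ (2 * k) * (complex_of_real (\<phi> s) + cis \<theta> * complex_of_real (\<phi> t))"
    using geom_rot_pow_complex[OF assms(3,1,2) fs(2), of k \<phi>] G by simp
  then have "cis \<theta> ^ (2 * k) = 1" using assms(3) unfolding \<phi>_def by simp
  then have "cos (real (2 * k) * \<theta>) = 1" unfolding DeMoivre by (metis cis.sel(1) one_complex.sel(1))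
  then have "\<exists>n::int. real (2 * k) * \<theta> = of_int n * 2 * pi" by (simp only: cos_one_2pi_int)
  then obtain n :: int where n: "real (2 * k) * \<theta> = real_of_int n * 2 * pi" by blast
  have e1: "real (2 * k) * \<theta> = (2 * pi) * (real k / real m)" unfolding \<theta>_def by simp
  have "(2 * pi) * (real k / real m) = (2 * pi) * real_of_int n"
  proof -
    have "(2 * pi) * (real k / real m) = real (2 * k) * \<theta>" using e1 by simp
    also have "\<dots> = real_of_int n * 2 * pi" by (rule n)
    also have "\<dots> = (2 * pi) * real_of_int n" by simp
    finally show ?thesis .
  qed
  then have "2 * pi = 0 \<or> real k / real m = real_of_int n" by (simp only: mult_cancel_left)
  then have "real k / real m = real_of_int n" using pi_gt_zero by auto
  moreover have "0 < real k / real m" "real k / real m < 1" using assms by auto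
  ultimately have "0 < real_of_int n" "real_of_int n < 1" by auto
  then have "0 < n" "n < 1" by simp_all
  then show False by simp
qed

lemma geom_rot_pow_ne_id_infinite:
  assumes "s \<in> S" "t \<in> S" "s \<noteq> t" "M s t = \<infinity>" "0 < k"
  shows "geom_rot s t ^^ k \<noteq> id"
proof
  assume G: "geom_rot s t ^^ k = id"
  have c: "cform s t = -1" "cform t s = -1" using assms symm unfolding cform_def by auto
  define \<phi> :: "'a \<Rightarrow> real" where "\<phi> = (\<lambda>u. if u = s then 1 else 0)"
  have "((geom_rot s t ^^ j) \<phi>) s = \<phi> s - 2 * real j * (\<phi> s + \<phi> t)
      \<and> ((geom_rot s t ^^ j) \<phi>) s + ((geom_rot s t ^^ j) \<phi>) t = \<phi> s + \<phi> t" for j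
  proof (induction j)
    case 0 then show ?case by simp
  next
    case (Suc j)
    define \<psi> where "\<psi> = (geom_rot s t ^^ j) \<phi>"
    have gs: "geom_rot s t \<psi> s = - \<psi> s - 2 * \<psi> t" using geom_rot_apply_first[of s t \<psi>] c by simp
    have gt: "geom_rot s t \<psi> t = 2 * \<psi> s + 3 * \<psi> t" using geom_rot_apply_second[OF assms(3), of \<psi>] c by simp
    have e: "(geom_rot s t ^^ Suc j) \<phi> = geom_rot s t \<psi>" unfolding \<psi>_def by simp
    have IH: "\<psi> s = \<phi> s - 2 * real j * (\<phi> s + \<phi> t)" "\<psi> s + \<psi> t = \<phi> s + \<phi> t"
      using Suc.IH unfolding \<psi>_def by auto
    show ?case unfolding e gs gt using IH by (simp add: algebra_simps)
  qed
  note h = this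
  have "(geom_rot s t ^^ k) \<phi> s = \<phi> s" using G by simp
  then have "2 * real k * (\<phi> s + \<phi> t) = 0" using h[of k] by simp
  then show False using assms unfolding \<phi>_def by simp
qed

lemma geom_word_cox_rel: "cox_rel S M u v \<Longrightarrow> geom_word u = geom_word v"
proof (induction rule: cox_rel.induct)
  case (cox_refl w) then show ?case by simp
next
  case (cox_sym u v) then show ?case by simp
next
  case (cox_trans u v w) then show ?case by simp
next
  case (cox_relator u v s t m)
  have "geom_rot s t ^^ m = id"
  proof (cases "s = t")
    case True
    then have "M s s = enat 1" using diag cox_relator by (simp add: one_enat_def)
    then have "m = 1" using cox_relator True by simp
    then show ?thesis using True geom_refl_involutive by (auto simp: fun_eq_iff geom_rot_def)
  next
    case False then show ?thesis using geom_rot_pow_order cox_relator by blast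
  qed
  then show ?case by (simp add: geom_word_append concat_replicate_pair geom_word_alt)
qed

lemma dihedral_order_le:
  assumes "s \<in> S" "t \<in> S" "s \<noteq> t" "0 < k" "cox_rel S M (alt s t (2 * k)) []"
  shows "\<exists>m. M s t = enat m \<and> m \<le> k"
proof -
  have G: "geom_rot s t ^^ k = id" using geom_word_cox_rel[OF assms(5)] by (simp add: geom_word_alt)
  show ?thesis
  proof (cases "M s t")
    case (enat m)
    then show ?thesis using geom_rot_pow_ne_id_finite[OF assms(1-3) enat assms(4)] G by (meson not_le)
  next
    case infinity
    then show ?thesis using geom_rot_pow_ne_id_infinite[OF assms(1-3) infinity assms(4)] G by blast
  qed
qed

end

section \<open>The parabolic subgroup theorem\<close>

context coxeter_system
begin

lemma reduced_Nil: "reduced S M []"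
  unfolding reduced_def by simp

lemma reduced_appendD:
  assumes "reduced S M (A @ B)"
  shows "reduced S M A" "reduced S M B"
proof -
  have s: "set A \<subseteq> S" "set B \<subseteq> S" using assms unfolding reduced_def by auto
  show "reduced S M A" unfolding reduced_def
  proof (intro conjI allI impI s(1))
    fix w assume "cox_rel S M A w"
    then have "cox_rel S M ([] @ A @ B) ([] @ w @ B)" using s by (intro cox_rel_context) auto
    then have "length (A @ B) \<le> length (w @ B)" using assms unfolding reduced_def by auto
    then show "length A \<le> length w" by simp
  qed
  show "reduced S M B" unfolding reduced_def
  proof (intro conjI allI impI s(2))
    fix w assume "cox_rel S M B w"
    then have "cox_rel S M (A @ B @ []) (A @ w @ [])" using s by (intro cox_rel_context) auto
    then have "length (A @ B) \<le> length (A @ w)" using assms unfolding reduced_def by auto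
    then show "length B \<le> length w" by simp
  qed
qed

lemma reduced_cox_rel_same_length:
  assumes "reduced S M x" "cox_rel S M x z" "length z = length x"
  shows "reduced S M z"
  unfolding reduced_def
proof (intro conjI allI impI)
  show "set z \<subseteq> S" using cox_rel_set[OF assms(2)] by simp
  fix w assume "cox_rel S M z w"
  then have "cox_rel S M x w" using assms(2) by (rule cox_trans[rotated])
  then show "length z \<le> length w" using assms unfolding reduced_def by auto
qed

lemma reduced_cox_rel_length_eq:
  assumes "reduced S M x" "reduced S M y" "cox_rel S M x y"
  shows "length x = length y"
  using assms cox_sym[OF assms(3)] unfolding reduced_def by (simp add: le_antisym)

lemma reduced_rev:
  assumes "reduced S M x"
  shows "reduced S M (rev x)"
  unfolding reduced_def
proof (intro conjI allI impI)
  show "set (rev x) \<subseteq> S" using assms unfolding reduced_def by simp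
  fix w assume "cox_rel S M (rev x) w"
  then have "cox_rel S M (rev (rev x)) (rev w)" using cox_rel_rev symm by blast
  then have "cox_rel S M x (rev w)" by simp
  then have "length x \<le> length (rev w)" using assms unfolding reduced_def by blast
  then show "length (rev x) \<le> length w" by simp
qed

text \<open>Proof of the parabolic subgroup theorem, following the proof of Matsumoto's theorem.
  In a counterexample (x, y) of minimal length k the first letters p and q differ, and the
  exchange condition turns it into the counterexample (q # butlast x, x). Iterating produces
  the alternating words of length k in p and q, which forces m(p,q) = k, but then they are
  related by a braid relation inside J.\<close>

definition bad_pair :: "'a set \<Rightarrow> nat \<Rightarrow> 'a list \<Rightarrow> 'a list \<Rightarrow> bool" where
  "bad_pair J k x y \<longleftrightarrow> reduced S M x \<and> reduced S M y \<and> length x = k \<and> length y = k \<and>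
     cox_rel S M x y \<and> set x \<subseteq> J \<and> set y \<subseteq> J \<and> \<not> cox_rel J M x y"

context
  fixes J :: "'a set" and k :: nat
  assumes J: "J \<subseteq> S"
    and shorter: "\<And>u v. reduced S M u \<Longrightarrow> reduced S M v \<Longrightarrow> cox_rel S M u v \<Longrightarrow>
                   set u \<subseteq> J \<Longrightarrow> set v \<subseteq> J \<Longrightarrow> length u < k \<Longrightarrow> cox_rel J M u v"
begin

lemma cox_rel_parabolic_same_head:
  assumes r: "reduced S M (q # a)" "reduced S M (q # b)" "cox_rel S M (q # a) (q # b)"
    and s: "set (q # a) \<subseteq> J" "set (q # b) \<subseteq> J" "length (q # a) = k"
  shows "cox_rel J M (q # a) (q # b)"
proof -
  have "cox_rel S M a b" using r(3) cox_rel_cancel_left[of S M "[q]"] diag by simp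
  moreover have "reduced S M a" "reduced S M b" using reduced_appendD(2)[of "[q]"] r by auto
  ultimately have "cox_rel J M a b" using shorter s by auto
  then have "cox_rel J M ([q] @ a @ []) ([q] @ b @ [])" using s by (intro cox_rel_context) auto
  then show ?thesis by simp
qed

lemma cox_rel_parabolic_same_last:
  assumes r: "reduced S M (a @ [e])" "reduced S M (b @ [e])" "cox_rel S M (a @ [e]) (b @ [e])"
    and s: "set (a @ [e]) \<subseteq> J" "set (b @ [e]) \<subseteq> J" "length (a @ [e]) = k"
  shows "cox_rel J M (a @ [e]) (b @ [e])"
proof -
  have "cox_rel S M a b" using r(3) cox_rel_cancel_right diag by blast
  moreover have "reduced S M a" "reduced S M b" using reduced_appendD(1) r by blast+
  ultimately have "cox_rel J M a b" using shorter s by auto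
  then show ?thesis using s by (intro cox_rel_append cox_refl) auto
qed

lemma bad_pair_heads_differ:
  assumes "bad_pair J k x y"
  shows "x \<noteq> [] \<and> y \<noteq> [] \<and> hd x \<noteq> hd y"
proof -
  have l: "length x = k" "length y = k" and n: "\<not> cox_rel J M x y"
    using assms unfolding bad_pair_def by auto
  have "x \<noteq> []"
  proof
    assume "x = []"
    then show False using l n cox_refl[of "[]" J M] by simp
  qed
  moreover have "hd x \<noteq> hd y" if "x = p # x'" "y = p # y'" for p x' y'
    using cox_rel_parabolic_same_head[of p x' y'] assms n that unfolding bad_pair_def by auto
  ultimately show ?thesis using l by (cases x; cases y) auto
qed

lemma bad_pair_exchange:
  assumes "bad_pair J k x (q # y')"
  obtains B b C where "x = B @ b # C" "cox_rel S M x (q # B @ C)"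
proof -
  have rx: "reduced S M x" and l: "length x = k" "length (q # y') = k" and xy: "cox_rel S M x (q # y')"
    and sy: "set (q # y') \<subseteq> J" using assms unfolding bad_pair_def by auto
  have qS: "q \<in> S" "set y' \<subseteq> S" using sy J by auto
  have "cox_rel S M ([q] @ x) ([q] @ q # y')" using xy qS by (intro cox_rel_append[OF cox_refl]) auto
  moreover have "cox_rel S M ([q, q] @ y') ([] @ y')" using qS diag
    by (intro cox_rel_append[OF cox_rel_double cox_refl]) auto
  ultimately have "cox_rel S M (q # x) y'" by (auto intro: cox_trans)
  then have "\<not> reduced S M (q # x)" using l unfolding reduced_def by fastforce
  then obtain B b C where x: "x = B @ b # C" and r: "cox_rel S M (q # x) (B @ C)"
    using exchange_condition[OF rx qS(1)] by blast
  have "cox_rel S M ([q] @ (q # x)) ([q] @ (B @ C))"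
    using qS by (intro cox_rel_append[OF cox_refl r]) auto
  moreover have "cox_rel S M ([q, q] @ x) ([] @ x)" using qS cox_rel_set[OF xy] diag
    by (intro cox_rel_append[OF cox_rel_double cox_refl]) auto
  ultimately have "cox_rel S M x (q # B @ C)" by (auto intro: cox_trans cox_sym)
  with x show ?thesis by (rule that)
qed

lemma bad_pair_step:
  assumes b: "bad_pair J k x y"
  shows "bad_pair J k (hd y # butlast x) x"
proof -
  obtain q y' where y: "y = q # y'" using bad_pair_heads_differ[OF b] by (cases y) auto
  have rx: "reduced S M x" and ry: "reduced S M y" and lx: "length x = k"
    and xy: "cox_rel S M x y" and sx: "set x \<subseteq> J" and sy: "set y \<subseteq> J" and nxy: "\<not> cox_rel J M x y"
    using b unfolding bad_pair_def by auto
  obtain B bb C where xB: "x = B @ bb # C" and xz: "cox_rel S M x (q # B @ C)"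
    using bad_pair_exchange b unfolding y by blast
  define z where "z = q # B @ C"
  have lz: "length z = k" using lx xB unfolding z_def by simp
  have rz: "reduced S M z" using reduced_cox_rel_same_length[OF rx xz[folded z_def]] lz lx by simp
  have sz: "set z \<subseteq> J" using sx sy y xB unfolding z_def by auto
  have zy: "cox_rel J M z y"
  proof -
    have "cox_rel S M (q # (B @ C)) (q # y')" using cox_trans[OF cox_sym[OF xz] xy] y by simp
    then show ?thesis using cox_rel_parabolic_same_head rz ry sz sy lz y unfolding z_def by metis
  qed
  have C: "C = []"
  proof (rule ccontr)
    assume "C \<noteq> []"
    then obtain C' e where "C = C' @ [e]" by (cases C rule: rev_cases) auto
    then have "x = (B @ bb # C') @ [e]" "z = (q # B @ C') @ [e]" using xB unfolding z_def by auto
    then have "cox_rel J M x z"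
      using cox_rel_parabolic_same_last rx rz xz[folded z_def] sx sz lx lz by metis
    then show False using zy nxy by (auto intro: cox_trans)
  qed
  have "bad_pair J k z x"
    unfolding bad_pair_def
  proof (intro conjI rz rx lz lx cox_sym[OF xz[folded z_def]] sz sx notI)
    assume "cox_rel J M z x"
    then show False using zy nxy by (auto intro: cox_trans cox_sym)
  qed
  moreover have "z = hd y # butlast x" using xB C y unfolding z_def by simp
  ultimately show ?thesis by simp
qed

lemma bad_pair_alternate:
  assumes b: "bad_pair J k u v"
  shows "bad_pair J k (rev (alt (hd v) (hd u) k)) (rev (alt (hd u) (hd v) k))"
proof -
  define p q where "p = hd u" and "q = hd v"
  define Z where "Z i = rev (alt q p i) @ take (k - i) u" for i
  have lu: "length u = k" using b unfolding bad_pair_def by simp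
  have k: "1 \<le> k" using bad_pair_heads_differ[OF b] lu by (cases u) auto
  have Z0: "Z 0 = u" unfolding Z_def using lu by simp
  have step: "hd (Z (i - 1)) # butlast (Z i) = Z (Suc i)" if i: "1 \<le> i" "i < k" for i
  proof -
    have "hd (Z (i - 1)) = (if even i then q else p)"
    proof (cases "i = 1")
      case True
      then show ?thesis using Z0 p_def by simp
    next
      case False
      then have "hd (rev (alt q p (i - 1))) = (if even i then q else p)"
        using i hd_rev_alt[of "i - 1" q p] by (cases i) auto
      moreover have "rev (alt q p (i - 1)) \<noteq> []" using i False by (cases "i - 1") auto
      ultimately show ?thesis unfolding Z_def by simp
    qed
    moreover have "take (k - i) u \<noteq> []" using i lu by (cases u) auto
    then have "butlast (Z i) = rev (alt q p i) @ take (k - Suc i) u"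
      unfolding Z_def using i lu by (simp add: butlast_append butlast_take)
    ultimately show ?thesis unfolding Z_def rev_alt_Suc by simp
  qed
  have "bad_pair J k (Z i) (Z (i - 1))" if "1 \<le> i" "i \<le> k" for i
    using that
  proof (induction i rule: nat_induct_at_least)
    case base
    have "Z 1 = hd v # butlast u" unfolding Z_def q_def using lu by (simp add: butlast_conv_take)
    then show ?case using bad_pair_step[OF b] Z0 by simp
  next
    case (Suc i)
    then show ?case using bad_pair_step[of "Z i" "Z (i - 1)"] step[of i] by simp
  qed
  from this[of k] k have "bad_pair J k (Z k) (rev (alt q p (k - 1)) @ take 1 u)"
    unfolding Z_def by (simp add: Suc_diff_le)
  moreover have "rev (alt q p (k - 1)) @ take 1 u = rev (alt p q k)"
    using k bad_pair_heads_differ[OF b] unfolding p_def by (cases k; cases u) auto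
  ultimately show ?thesis unfolding Z_def p_def q_def by simp
qed

end

lemma reduced_alt_length_le:
  assumes "p \<in> S" "q \<in> S" "p \<noteq> q" "M p q = enat m" "reduced S M (alt p q k)"
  shows "k \<le> m"
proof (rule ccontr)
  assume "\<not> k \<le> m"
  have m2: "2 \<le> m" using matrix_ge_2[OF assms(1-4)] .
  define R where "R = (if even (Suc m) then alt p q (k - Suc m) else alt q p (k - Suc m))"
  have split: "alt p q k = alt p q (Suc m) @ R"
    unfolding R_def using alt_add[of p q "Suc m" "k - Suc m"] \<open>\<not> k \<le> m\<close> by simp
  have "cox_rel S M (alt p q (Suc m)) (alt q p (m - 1))"
    using cox_rel_braid_shift[of p S q M m, OF assms(1,2) cox_rel_braid[OF assms(1,2,4) diag] _ diag] m2
    by simp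
  moreover have "set R \<subseteq> S"
    using set_alt[of p q "k - Suc m"] set_alt[of q p "k - Suc m"] assms(1,2) unfolding R_def by auto
  ultimately have "cox_rel S M (alt p q k) (alt q p (m - 1) @ R)"
    unfolding split by (intro cox_rel_append cox_refl)
  then have "k \<le> m - 1 + length R" using assms(5) unfolding reduced_def by fastforce
  moreover have "length R = k - Suc m" unfolding R_def by simp
  ultimately show False using \<open>\<not> k \<le> m\<close> m2 by linarith
qed

lemma bad_pair_alternating:
  assumes J: "J \<subseteq> S" and b: "bad_pair J k (rev (alt q p k)) (rev (alt p q k))"
    and pq: "p \<noteq> q" and k: "1 \<le> k"
  shows False
proof -
  define A B where "A = alt p q k" and "B = alt q p k"
  have rA: "reduced S M (rev A)" and BA: "cox_rel S M (rev B) (rev A)"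
    and sA: "set (rev A) \<subseteq> J" and sB: "set (rev B) \<subseteq> J" and nBA: "\<not> cox_rel J M (rev B) (rev A)"
    using b unfolding bad_pair_def A_def B_def by auto
  obtain k' where k': "k = Suc k'" using k by (cases k) auto
  have pJ: "p \<in> J" "q \<in> J" using sA sB unfolding A_def B_def k' by auto
  then have pS: "p \<in> S" "q \<in> S" using J by auto
  have "cox_rel S M A B" using cox_sym[OF cox_rel_rev[OF BA]] symm by simp
  then have "cox_rel S M (A @ rev B) (B @ rev B)"
    using sB J by (intro cox_rel_append cox_refl) auto
  moreover have "cox_rel S M (B @ rev B) []"
    using cox_rel_append_rev[of B S M] sB J diag by auto
  moreover have "alt p q (2 * k) = A @ rev B"
    unfolding A_def B_def rev_alt using alt_add[of p q k k] by (simp add: mult_2)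
  ultimately have "cox_rel S M (alt p q (2 * k)) []" by (auto intro: cox_trans)
  then have "\<exists>m. M p q = enat m \<and> m \<le> k" using dihedral_order_le[OF pS pq] k by simp
  then obtain m where m: "M p q = enat m" "m \<le> k" by blast
  moreover have "k \<le> m"
    using reduced_alt_length_le[OF pS pq m(1)] reduced_rev[OF rA] unfolding A_def by simp
  ultimately have "M p q = enat k" by simp
  moreover have "\<forall>s\<in>J. M s s = 1" using diag J by auto
  ultimately have "cox_rel J M A B" unfolding A_def B_def using cox_rel_braid[OF pJ] by blast
  then have "cox_rel J M (rev A) (rev B)" using cox_rel_rev symm J by blast
  then show False using nBA cox_sym by blast
qed

theorem reduced_cox_rel_parabolic:
  assumes J: "J \<subseteq> S"
  shows "reduced S M u \<Longrightarrow> reduced S M v \<Longrightarrow> cox_rel S M u v \<Longrightarrow> set u \<subseteq> J \<Longrightarrow> set v \<subseteq> J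
    \<Longrightarrow> cox_rel J M u v"
proof (induction "length u" arbitrary: u v rule: less_induct)
  case less
  show ?case
  proof (rule ccontr)
    assume "\<not> cox_rel J M u v"
    then have b: "bad_pair J (length u) u v"
      unfolding bad_pair_def using less reduced_cox_rel_length_eq by simp
    have shorter: "\<And>u' v'. reduced S M u' \<Longrightarrow> reduced S M v' \<Longrightarrow> cox_rel S M u' v' \<Longrightarrow>
        set u' \<subseteq> J \<Longrightarrow> set v' \<subseteq> J \<Longrightarrow> length u' < length u \<Longrightarrow> cox_rel J M u' v'"
      using less(1) by blast
    have "hd u \<noteq> hd v" "1 \<le> length u"
      using bad_pair_heads_differ[OF J shorter b] by (auto simp: Suc_le_eq)
    then show False
      using bad_pair_alternating[OF J bad_pair_alternate[OF J shorter b]] by blast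
  qed
qed

lemma not_reduced_Cons_parabolic:
  assumes J: "J \<subseteq> S" and a: "a \<in> J" and y: "reduced S M y" "set y \<subseteq> J" "\<not> reduced S M (a # y)"
  obtains z where "set z \<subseteq> J" "length z < length (a # y)" "cox_rel J M (a # y) z"
proof -
  have aS: "a \<in> S" and yS: "set y \<subseteq> S" using a y J by auto
  obtain B b C where yB: "y = B @ b # C" and r: "cox_rel S M (a # y) (B @ C)"
    using exchange_condition[OF y(1) aS y(3)] by blast
  define z where "z = a # B @ C"
  have "cox_rel S M ([a, a] @ y) ([] @ y)" using aS yS diag
    by (intro cox_rel_append[OF cox_rel_double cox_refl]) auto
  moreover have "cox_rel S M ([a] @ (a # y)) ([a] @ (B @ C))"
    using aS by (intro cox_rel_append[OF cox_refl r]) auto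
  ultimately have yz: "cox_rel S M y z" unfolding z_def by (auto intro: cox_trans cox_sym)
  have rz: "reduced S M z" using reduced_cox_rel_same_length[OF y(1) yz] yB unfolding z_def by simp
  have sz: "set z \<subseteq> J" using y a yB unfolding z_def by auto
  have "cox_rel J M ([a] @ y) ([a] @ z)"
    using a by (intro cox_rel_append[OF cox_refl reduced_cox_rel_parabolic[OF J y(1) rz yz y(2) sz]]) auto
  moreover have "cox_rel J M ([a, a] @ (B @ C)) ([] @ (B @ C))" using a sz diag J unfolding z_def
    by (intro cox_rel_append[OF cox_rel_double cox_refl]) auto
  ultimately have "cox_rel J M (a # y) (B @ C)" unfolding z_def by (auto intro: cox_trans)
  moreover have "set (B @ C) \<subseteq> J" using sz unfolding z_def by auto
  ultimately show ?thesis using that[of "B @ C"] yB by simp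
qed

theorem exists_reduced_parabolic:
  assumes J: "J \<subseteq> S"
  shows "set x \<subseteq> J \<Longrightarrow> \<exists>y. reduced S M y \<and> cox_rel J M x y"
proof (induction "length x" arbitrary: x rule: less_induct)
  case less
  show ?case
  proof (cases x)
    case Nil
    then show ?thesis using reduced_Nil cox_refl[of "[]" J M] by auto
  next
    case (Cons a x')
    have a: "a \<in> J" and x': "set x' \<subseteq> J" using less Cons by auto
    obtain y where y: "reduced S M y" "cox_rel J M x' y" using less Cons x' by auto
    have yJ: "set y \<subseteq> J" using cox_rel_set[OF y(2)] by simp
    have "length y \<le> length x'"
      using y cox_sym[OF cox_rel_mono[OF y(2) J]] unfolding reduced_def by auto
    have ax: "cox_rel J M x (a # y)"
      using cox_rel_append[OF cox_refl[of "[a]"] y(2)] a Cons by simp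
    show ?thesis
    proof (cases "reduced S M (a # y)")
      case False
      obtain z where z: "set z \<subseteq> J" "length z < length (a # y)" "cox_rel J M (a # y) z"
        using not_reduced_Cons_parabolic[OF J a y(1) yJ False] .
      then have "length z < length x" using \<open>length y \<le> length x'\<close> Cons by simp
      then obtain y' where "reduced S M y'" "cox_rel J M z y'" using less z(1) by blast
      then show ?thesis using cox_trans[OF ax z(3)] by (blast intro: cox_trans)
    qed (use ax in blast)
  qed
qed

theorem cox_rel_parabolic:
  assumes J: "J \<subseteq> S" and "set u \<subseteq> J" "set v \<subseteq> J" "cox_rel S M u v"
  shows "cox_rel J M u v"
proof -
  obtain u' where u': "reduced S M u'" "cox_rel J M u u'" using exists_reduced_parabolic[OF J assms(2)] by blast
  obtain v' where v': "reduced S M v'" "cox_rel J M v v'" using exists_reduced_parabolic[OF J assms(3)] by blast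
  have "cox_rel S M u' v'"
    using cox_rel_mono[OF u'(2) J] cox_rel_mono[OF v'(2) J] assms(4)
    by (blast intro: cox_trans cox_sym)
  moreover have "set u' \<subseteq> J" "set v' \<subseteq> J" using cox_rel_set u'(2) v'(2) by blast+
  ultimately have "cox_rel J M u' v'" using reduced_cox_rel_parabolic[OF J u'(1) v'(1)] by blast
  then show ?thesis using u'(2) v'(2) by (blast intro: cox_trans cox_sym)
qed

end

section \<open>Coxeter groups as groups\<close>

lemma coxeter_group_carrier: "carrier (coxeter_group S M) = cox_class S M ` {w. set w \<subseteq> S}"
  by (simp add: coxeter_group_def)

lemma coxeter_group_one: "\<one>\<^bsub>coxeter_group S M\<^esub> = cox_class S M []"
  by (simp add: coxeter_group_def)

lemma coxeter_group_mult:
  assumes "set u \<subseteq> S" "set v \<subseteq> S"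
  shows "cox_class S M u \<otimes>\<^bsub>coxeter_group S M\<^esub> cox_class S M v = cox_class S M (u @ v)"
proof -
  have "{x. \<exists>a\<in>cox_class S M u. \<exists>b\<in>cox_class S M v. cox_rel S M (a @ b) x} = cox_class S M (u @ v)"
  proof (intro equalityI subsetI)
    fix x assume "x \<in> {x. \<exists>a\<in>cox_class S M u. \<exists>b\<in>cox_class S M v. cox_rel S M (a @ b) x}"
    then obtain a b where "cox_rel S M u a" "cox_rel S M v b" "cox_rel S M (a @ b) x"
      unfolding cox_class_def by auto
    then have "cox_rel S M (u @ v) x" by (blast intro: cox_trans cox_rel_append)
    then show "x \<in> cox_class S M (u @ v)" unfolding cox_class_def by simp
  next
    fix x assume "x \<in> cox_class S M (u @ v)"
    moreover have "u \<in> cox_class S M u" "v \<in> cox_class S M v"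
      using assms unfolding cox_class_def by (auto intro: cox_refl)
    ultimately show "x \<in> {x. \<exists>a\<in>cox_class S M u. \<exists>b\<in>cox_class S M v. cox_rel S M (a @ b) x}"
      unfolding cox_class_def by auto
  qed
  then show ?thesis by (simp add: coxeter_group_def)
qed

lemma coxeter_group_is_group:
  assumes diag: "\<forall>s\<in>S. M s s = 1"
  shows "group (coxeter_group S M)"
proof (rule groupI)
  fix x y assume "x \<in> carrier (coxeter_group S M)" "y \<in> carrier (coxeter_group S M)"
  then obtain u v where "x = cox_class S M u" "set u \<subseteq> S" "y = cox_class S M v" "set v \<subseteq> S"
    by (auto simp: coxeter_group_carrier)
  then show "x \<otimes>\<^bsub>coxeter_group S M\<^esub> y \<in> carrier (coxeter_group S M)"
    by (auto simp: coxeter_group_mult coxeter_group_carrier)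
next
  show "\<one>\<^bsub>coxeter_group S M\<^esub> \<in> carrier (coxeter_group S M)" by (auto simp: coxeter_group_carrier coxeter_group_one)
next
  fix x y z assume "x \<in> carrier (coxeter_group S M)" "y \<in> carrier (coxeter_group S M)"
    "z \<in> carrier (coxeter_group S M)"
  then obtain u v w where "x = cox_class S M u" "set u \<subseteq> S" "y = cox_class S M v" "set v \<subseteq> S"
    "z = cox_class S M w" "set w \<subseteq> S"
    by (auto simp: coxeter_group_carrier)
  then show "x \<otimes>\<^bsub>coxeter_group S M\<^esub> y \<otimes>\<^bsub>coxeter_group S M\<^esub> z
     = x \<otimes>\<^bsub>coxeter_group S M\<^esub> (y \<otimes>\<^bsub>coxeter_group S M\<^esub> z)"
    by (simp add: coxeter_group_mult)
next
  fix x assume "x \<in> carrier (coxeter_group S M)"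
  then obtain u where "x = cox_class S M u" "set u \<subseteq> S" by (auto simp: coxeter_group_carrier)
  then show "\<one>\<^bsub>coxeter_group S M\<^esub> \<otimes>\<^bsub>coxeter_group S M\<^esub> x = x"
    by (simp add: coxeter_group_one coxeter_group_mult)
next
  fix x assume "x \<in> carrier (coxeter_group S M)"
  then obtain u where x: "x = cox_class S M u" "set u \<subseteq> S" by (auto simp: coxeter_group_carrier)
  have "cox_class S M (rev u) \<otimes>\<^bsub>coxeter_group S M\<^esub> x = cox_class S M (rev u @ u)"
    using x by (simp add: coxeter_group_mult)
  also have "\<dots> = cox_class S M []"
    using cox_rel_rev_append[of u S M] x diag by (intro cox_class_eq) auto
  moreover have "cox_class S M (rev u) \<in> carrier (coxeter_group S M)" using x by (auto simp: coxeter_group_carrier)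
  ultimately show "\<exists>y\<in>carrier (coxeter_group S M). y \<otimes>\<^bsub>coxeter_group S M\<^esub> x = \<one>\<^bsub>coxeter_group S M\<^esub>"
    by (auto simp: coxeter_group_one)
qed

lemma coxeter_group_inv:
  assumes diag: "\<forall>s\<in>S. M s s = 1" and u: "set u \<subseteq> S"
  shows "inv\<^bsub>coxeter_group S M\<^esub> (cox_class S M u) = cox_class S M (rev u)"
proof -
  interpret G: group "coxeter_group S M" by (rule coxeter_group_is_group[of S M, OF diag])
  have "cox_class S M (rev u) \<otimes>\<^bsub>coxeter_group S M\<^esub> cox_class S M u = cox_class S M (rev u @ u)"
    using u by (simp add: coxeter_group_mult)
  also have "\<dots> = cox_class S M []"
    using cox_rel_rev_append[of u S M] u diag by (intro cox_class_eq) auto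
  finally show ?thesis using u
    by (intro G.inv_equality) (auto simp: coxeter_group_carrier coxeter_group_one)
qed

lemma generate_cox_gen:
  assumes diag: "\<forall>s\<in>S. M s s = 1" and J: "J \<subseteq> S"
  shows "generate (coxeter_group S M) (cox_gen S M ` J) = cox_class S M ` {u. set u \<subseteq> J}"
proof (intro equalityI subsetI)
  fix x assume "x \<in> generate (coxeter_group S M) (cox_gen S M ` J)"
  then show "x \<in> cox_class S M ` {u. set u \<subseteq> J}"
  proof (induction rule: generate.induct)
    case one then show ?case by (auto simp: coxeter_group_one)
  next
    case (incl h) then show ?case by (auto simp: cox_gen_def)
  next
    case (inv h)
    then obtain s where "s \<in> J" "h = cox_class S M [s]" by (auto simp: cox_gen_def)
    then show ?case using coxeter_group_inv[of S M "[s]", OF diag] J by auto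
  next
    case (eng h1 h2)
    then obtain u v where "h1 = cox_class S M u" "set u \<subseteq> J" "h2 = cox_class S M v" "set v \<subseteq> J" by auto
    then show ?case using coxeter_group_mult[of u S v M] J by auto
  qed
next
  fix x assume "x \<in> cox_class S M ` {u. set u \<subseteq> J}"
  then obtain u where x: "x = cox_class S M u" "set u \<subseteq> J" by auto
  have "cox_class S M u \<in> generate (coxeter_group S M) (cox_gen S M ` J)" using x(2)
  proof (induction u)
    case Nil then show ?case using generate.one[of "coxeter_group S M"] by (simp add: coxeter_group_one)
  next
    case (Cons a u)
    then have "cox_class S M [a] \<in> generate (coxeter_group S M) (cox_gen S M ` J)"
      by (intro generate.incl) (auto simp: cox_gen_def)
    then have "cox_class S M [a] \<otimes>\<^bsub>coxeter_group S M\<^esub> cox_class S M u \<in> generate (coxeter_group S M) (cox_gen S M ` J)"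
      using Cons by (intro generate.eng) auto
    moreover have "cox_class S M [a] \<otimes>\<^bsub>coxeter_group S M\<^esub> cox_class S M u = cox_class S M (a # u)"
      using Cons J by (subst coxeter_group_mult) auto
    ultimately show ?case by simp
  qed
  then show "x \<in> generate (coxeter_group S M) (cox_gen S M ` J)" using x by simp
qed

lemma concat_map_concat_replicate: "concat (map g (concat (replicate m [s, t]))) = concat (replicate m (g s @ g t))"
  by (induction m) auto

lemma cox_rel_subst:
  assumes gs: "\<forall>a\<in>Sb. set (g a) \<subseteq> Sc"
    and rel: "\<forall>s\<in>Sb. \<forall>t\<in>Sb. \<forall>m. Mb s t = enat m \<longrightarrow> cox_rel Sc Mc (concat (replicate m (g s @ g t))) []"
  shows "cox_rel Sb Mb u v \<Longrightarrow> cox_rel Sc Mc (concat (map g u)) (concat (map g v))"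
proof (induction rule: cox_rel.induct)
  case (cox_refl w) then show ?case using gs by (intro cox_rel.cox_refl) auto
next
  case (cox_sym u v) then show ?case by (blast intro: cox_rel.cox_sym)
next
  case (cox_trans u v w) then show ?case by (blast intro: cox_rel.cox_trans)
next
  case (cox_relator u v s t m)
  have r: "cox_rel Sc Mc (concat (replicate m (g s @ g t))) []" using rel cox_relator by blast
  have "cox_rel Sc Mc (concat (map g u) @ concat (replicate m (g s @ g t)) @ concat (map g v))
        (concat (map g u) @ [] @ concat (map g v))"
    using cox_relator gs by (intro cox_rel_context[OF r]) auto
  then show ?case by (simp add: concat_map_concat_replicate)
qed

definition induced_hom :: "'a set \<Rightarrow> ('a \<Rightarrow> 'a \<Rightarrow> enat) \<Rightarrow> 'a set \<Rightarrow> 'b set \<Rightarrow> ('b \<Rightarrow> 'b \<Rightarrow> enat)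
    \<Rightarrow> ('a \<Rightarrow> 'b list) \<Rightarrow> 'a list set \<Rightarrow> 'b list set" where
  "induced_hom Sa Ma Sb Sc Mc g A = cox_class Sc Mc (concat (map g (SOME u. set u \<subseteq> Sb \<and> A = cox_class Sa Ma u)))"

lemma induced_hom_class:
  assumes Sb: "Sb \<subseteq> Sa"
    and pres: "\<And>u v. set u \<subseteq> Sb \<Longrightarrow> set v \<subseteq> Sb \<Longrightarrow> cox_rel Sa Ma u v
                  \<Longrightarrow> cox_rel Sc Mc (concat (map g u)) (concat (map g v))"
    and u: "set u \<subseteq> Sb"
  shows "induced_hom Sa Ma Sb Sc Mc g (cox_class Sa Ma u) = cox_class Sc Mc (concat (map g u))"
proof -
  define u' where "u' = (SOME u'. set u' \<subseteq> Sb \<and> cox_class Sa Ma u = cox_class Sa Ma u')"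
  have "set u' \<subseteq> Sb \<and> cox_class Sa Ma u = cox_class Sa Ma u'"
    unfolding u'_def by (rule someI[of _ u]) (use u in simp)
  then have u': "set u' \<subseteq> Sb" "cox_rel Sa Ma u u'" using cox_class_eq_iff[of u' Sa Ma u] Sb by auto
  have "cox_class Sc Mc (concat (map g u')) = cox_class Sc Mc (concat (map g u))"
    by (rule cox_class_eq[OF cox_sym[OF pres[OF u u'(1) u'(2)]]])
  then show ?thesis unfolding induced_hom_def u'_def[symmetric] by simp
qed

lemma induced_hom_hom:
  assumes Sb: "Sb \<subseteq> Sa"
    and pres: "\<And>u v. set u \<subseteq> Sb \<Longrightarrow> set v \<subseteq> Sb \<Longrightarrow> cox_rel Sa Ma u v
                  \<Longrightarrow> cox_rel Sc Mc (concat (map g u)) (concat (map g v))"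
    and gs: "\<forall>a\<in>Sb. set (g a) \<subseteq> Sc"
  shows "induced_hom Sa Ma Sb Sc Mc g \<in> hom ((coxeter_group Sa Ma)\<lparr>carrier := cox_class Sa Ma ` {u. set u \<subseteq> Sb}\<rparr>)
                                     (coxeter_group Sc Mc)"
proof (rule homI)
  fix x assume "x \<in> carrier ((coxeter_group Sa Ma)\<lparr>carrier := cox_class Sa Ma ` {u. set u \<subseteq> Sb}\<rparr>)"
  then obtain u where x: "x = cox_class Sa Ma u" "set u \<subseteq> Sb" by auto
  have "induced_hom Sa Ma Sb Sc Mc g x = cox_class Sc Mc (concat (map g u))"
    using induced_hom_class[where Sb=Sb and Sa=Sa and Ma=Ma and Sc=Sc and Mc=Mc and g=g, OF Sb pres x(2)] x(1) by simp
  moreover have "set (concat (map g u)) \<subseteq> Sc" using gs x by auto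
  ultimately show "induced_hom Sa Ma Sb Sc Mc g x \<in> carrier (coxeter_group Sc Mc)"
    by (simp add: coxeter_group_carrier)
next
  fix x y assume "x \<in> carrier ((coxeter_group Sa Ma)\<lparr>carrier := cox_class Sa Ma ` {u. set u \<subseteq> Sb}\<rparr>)"
    "y \<in> carrier ((coxeter_group Sa Ma)\<lparr>carrier := cox_class Sa Ma ` {u. set u \<subseteq> Sb}\<rparr>)"
  then obtain u v where x: "x = cox_class Sa Ma u" "set u \<subseteq> Sb" "y = cox_class Sa Ma v" "set v \<subseteq> Sb" by auto
  have m: "x \<otimes>\<^bsub>(coxeter_group Sa Ma)\<lparr>carrier := cox_class Sa Ma ` {u. set u \<subseteq> Sb}\<rparr>\<^esub> y = cox_class Sa Ma (u @ v)"
    using x Sb coxeter_group_mult[of u Sa v Ma] by auto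
  have su: "set (concat (map g u)) \<subseteq> Sc" "set (concat (map g v)) \<subseteq> Sc" using x gs by auto
  show "induced_hom Sa Ma Sb Sc Mc g (x \<otimes>\<^bsub>(coxeter_group Sa Ma)\<lparr>carrier := cox_class Sa Ma ` {u. set u \<subseteq> Sb}\<rparr>\<^esub> y)
      = induced_hom Sa Ma Sb Sc Mc g x \<otimes>\<^bsub>coxeter_group Sc Mc\<^esub> induced_hom Sa Ma Sb Sc Mc g y"
    unfolding m using induced_hom_class[where Sb=Sb and Sa=Sa and Ma=Ma and Sc=Sc and Mc=Mc and g=g, OF Sb pres]
      x coxeter_group_mult[OF su] by simp
qed

lemma concat_map_singleton: "concat (map (\<lambda>a. [f a]) u) = map f u"
  by (induction u) auto

lemma coxeter_group_full: "(coxeter_group S M)\<lparr>carrier := cox_class S M ` {u. set u \<subseteq> S}\<rparr> = coxeter_group S M"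
  by (simp add: coxeter_group_def)


section \<open>The contracted Coxeter matrix\<close>

lemma contract_matrix_simps:
  "contract_matrix M sp sm None None = 1"
  "contract_matrix M sp sm (Some s) (Some t) = (if s = t then 1 else M s t)"
  "contract_matrix M sp sm (Some s) None =
     (if M s sp = 2 \<or> M s sm = 2 then M s sp + M s sm - 2 else \<infinity>)"
  "contract_matrix M sp sm None (Some s) =
     (if M s sp = 2 \<or> M s sm = 2 then M s sp + M s sm - 2 else \<infinity>)"
  unfolding contract_matrix_def by auto

lemma enat_2_add_diff: "(2::enat) + x - 2 = x"
  by (cases x) (simp_all add: numeral_eq_enat)

locale edge_contraction = coxeter_system S M for S :: "'a set" and M +
  fixes sp sm :: 'a and n :: nat and j :: "nat \<Rightarrow> 'a"
  assumes sp: "sp \<in> S" and sm: "sm \<in> S" and edge: "M sp sm = 3"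
    and B: "condition_B S M sp sm n j"
begin

abbreviation "Se \<equiv> contract_set S sp sm"
abbreviation "Ne \<equiv> contract_matrix M sp sm"
abbreviation "S' \<equiv> S - {j n}"

lemma n_ge_1: "1 \<le> n" and j_0: "j 0 = sm" and j_1: "j 1 = sp" and j_in_S: "k \<le> n \<Longrightarrow> j k \<in> S"
  and j_inj: "inj_on j {0..n}"
  using B unfolding condition_B_def by auto

lemma j_eq_iff: "a \<le> n \<Longrightarrow> b \<le> n \<Longrightarrow> j a = j b \<longleftrightarrow> a = b"
  using j_inj unfolding inj_on_def by auto

lemma M_j_j:
  assumes "1 \<le> a" "a \<le> n" "b \<le> n" "a \<noteq> b"
  shows "M (j a) (j b) = (if a = Suc b \<or> b = Suc a then 3 else 2)"
proof -
  have "M (j b) (j a) = 3" if "a = Suc b"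
    using B that assms unfolding condition_B_def by auto
  then have "a = Suc b \<Longrightarrow> M (j a) (j b) = 3" using symm j_in_S assms by metis
  moreover have "b = Suc a \<Longrightarrow> M (j a) (j b) = 3" using B assms unfolding condition_B_def by auto
  moreover have "M (j a) (j b) = 2" if "a \<noteq> Suc b" "b \<noteq> Suc a"
    using B assms that j_in_S j_eq_iff[of b a] j_eq_iff[of b "a - 1"] j_eq_iff[of b "Suc a"]
    unfolding condition_B_def by (auto simp: Suc_diff_le)
  ultimately show ?thesis by auto
qed

lemma M_j_other:
  assumes "1 \<le> k" "k \<le> n" "s \<in> S" "s \<notin> j ` {0..n}"
  shows "M (j k) s = 2"
proof -
  have "s \<noteq> j k" "s \<noteq> j (k - 1)" "k < n \<longrightarrow> s \<noteq> j (Suc k)" using assms by force+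
  then show ?thesis using B assms unfolding condition_B_def by auto
qed

text \<open>The generator map of tau: s_(j l) \<mapsto> s_(j (l+1)) for 1 \<le> l < n, s_(j 0) \<mapsto> s_0 = None,
  and s \<mapsto> s otherwise.\<close>

definition relabel :: "'a \<Rightarrow> 'a option" where
  "relabel a = (if a \<in> j ` {0..<n}
     then (let l = inv_into {0..n} j a in if l = 0 then None else Some (j (Suc l)))
     else Some a)"

lemma relabel_j: "l < n \<Longrightarrow> relabel (j l) = (if l = 0 then None else Some (j (Suc l)))"
  using inv_into_f_f[OF j_inj, of l] unfolding relabel_def by auto

lemma relabel_other: "a \<notin> j ` {0..<n} \<Longrightarrow> relabel a = Some a"
  unfolding relabel_def by simp

lemma S'_cases:
  assumes "a \<in> S'"
  obtains "a = j 0" | l where "1 \<le> l" "l < n" "a = j l" | "a \<notin> j ` {0..n}"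
proof (cases "a \<in> j ` {0..n}")
  case True
  then obtain l where "l \<le> n" "a = j l" by auto
  then show ?thesis using that(1) that(2)[of l] assms by (cases "l = 0"; cases "l = n") auto
qed (use that in auto)

lemma relabel_image: "relabel ` S' = Se"
proof (intro equalityI subsetI)
  fix x assume "x \<in> relabel ` S'"
  then obtain a where a: "a \<in> S'" "x = relabel a" by auto
  show "x \<in> Se"
  proof (rule S'_cases[OF a(1)])
    fix l assume "1 \<le> l" "l < n" "a = j l"
    then show ?thesis using a j_in_S j_eq_iff[of "Suc l" 0] j_eq_iff[of "Suc l" 1] relabel_j
      unfolding contract_set_def j_0[symmetric] j_1[symmetric] by auto
  next
    assume "a \<notin> j ` {0..n}"
    then show ?thesis using a n_ge_1 relabel_other
      unfolding contract_set_def j_0[symmetric] j_1[symmetric] by force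
  qed (use a relabel_j n_ge_1 in \<open>auto simp: contract_set_def\<close>)
next
  fix x assume x: "x \<in> Se"
  show "x \<in> relabel ` S'"
  proof (cases x)
    case None
    then show ?thesis using relabel_j[of 0] n_ge_1 j_in_S j_eq_iff[of 0 n] by force
  next
    case (Some b)
    then have b: "b \<in> S" "b \<noteq> j 0" "b \<noteq> j 1" using x unfolding contract_set_def j_0 j_1 by auto
    show ?thesis
    proof (cases "b \<in> j ` {0..n}")
      case True
      then obtain l where l: "l \<le> n" "b = j l" by auto
      then have "l \<noteq> 0" "l \<noteq> 1" using b by metis+
      then have "relabel (j (l - 1)) = x" "j (l - 1) \<in> S'"
        using relabel_j[of "l - 1"] j_in_S j_eq_iff[of "l - 1" n] Some l by auto
      then show ?thesis by force
    next
      case False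
      then show ?thesis using relabel_other[of b] b Some by force
    qed
  qed
qed

lemma relabel_in: "a \<in> S' \<Longrightarrow> relabel a \<in> Se"
  using relabel_image by blast

lemma contract_matrix_None_relabel:
  assumes "b \<in> S'" "b \<noteq> j 0"
  shows "Ne None (relabel b) = M (j 0) b"
proof (rule S'_cases[OF assms(1)])
  fix l assume l: "1 \<le> l" "l < n" "b = j l"
  have "M (j (Suc l)) sm = 2" "M (j (Suc l)) sp = (if l = 1 then 3 else 2)"
    using M_j_j[of "Suc l" 0] M_j_j[of "Suc l" 1] l unfolding j_0 j_1 by auto
  moreover have "M (j 0) (j l) = (if l = 1 then 3 else 2)"
    using M_j_j[of l 0] l symm j_in_S by auto
  ultimately show ?thesis
    using l relabel_j[of l] enat_2_add_diff[of 3] enat_2_add_diff[of 2]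
    by (simp add: contract_matrix_simps add.commute)
next
  assume b: "b \<notin> j ` {0..n}"
  have "M b sp = 2" using M_j_other[of 1 b] assms b n_ge_1 symm[of b sp] sp unfolding j_1 by auto
  moreover have "relabel b = Some b" using b by (intro relabel_other) auto
  ultimately show ?thesis
    using b enat_2_add_diff symm[of b sm] assms sm by (auto simp: contract_matrix_simps j_0)
qed (use assms in simp)

lemma contract_matrix_diag: "\<forall>x\<in>Se. Ne x x = 1"
  by (auto simp: contract_matrix_simps contract_set_def split: option.split)

lemma contract_matrix_sym: "x \<in> Se \<Longrightarrow> y \<in> Se \<Longrightarrow> Ne x y = Ne y x"
  by (cases x; cases y) (auto simp: contract_matrix_simps contract_set_def symm)

lemma relabel_matrix_shift:
  assumes "1 \<le> l" "l < n" "b \<in> S'" "b \<noteq> j 0" "b \<noteq> j l"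
  shows "Ne (relabel (j l)) (relabel b) = M (j l) b"
proof (rule S'_cases[OF assms(3)])
  fix l' assume l': "1 \<le> l'" "l' < n" "b = j l'"
  then have "l \<noteq> l'" using assms by auto
  then show ?thesis
    using assms l' relabel_j M_j_j[of "Suc l" "Suc l'"] M_j_j[of l l'] j_eq_iff[of "Suc l" "Suc l'"]
    by (auto simp: contract_matrix_simps)
next
  assume b: "b \<notin> j ` {0..n}"
  then have "relabel b = Some b" by (intro relabel_other) auto
  then show ?thesis
    using assms b relabel_j[of l] M_j_other[of "Suc l" b] M_j_other[of l b]
    by (auto simp: contract_matrix_simps)
qed (use assms in simp)

lemma relabel_matrix:
  assumes a: "a \<in> S'" and b: "b \<in> S'"
  shows "Ne (relabel a) (relabel b) = M a b"
proof (cases "a = b")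
  case True
  then show ?thesis using diag a by (cases "relabel a") (auto simp: contract_matrix_simps)
next
  case ab: False
  have swap: "Ne (relabel b) (relabel a) = M b a \<Longrightarrow> ?thesis"
    using contract_matrix_sym relabel_in a b symm by auto
  have None: "relabel (j 0) = None" using relabel_j[of 0] n_ge_1 by simp
  consider "a = j 0" | "b = j 0" | l where "1 \<le> l" "l < n" "a = j l" "b \<noteq> j 0"
    | l where "1 \<le> l" "l < n" "b = j l" "a \<noteq> j 0" | "a \<notin> j ` {0..n}" "b \<notin> j ` {0..n}"
    using S'_cases[OF a] S'_cases[OF b] by metis
  then show ?thesis
  proof cases
    case 1
    then show ?thesis using contract_matrix_None_relabel[OF b] ab None by auto
  next
    case 2
    then show ?thesis using swap contract_matrix_None_relabel[OF a] ab None by auto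
  next
    case 3
    then show ?thesis using relabel_matrix_shift[OF _ _ b] ab by auto
  next
    case 4
    then show ?thesis using swap relabel_matrix_shift[OF _ _ a] ab by auto
  next
    case 5
    then have "relabel a = Some a" "relabel b = Some b" by (auto intro: relabel_other)
    then show ?thesis using ab by (simp add: contract_matrix_simps)
  qed
qed

end

section \<open>The isomorphism and the conjugation identity\<close>

context edge_contraction
begin

lemma cox_rel_relabel:
  assumes "set u \<subseteq> S'" "set v \<subseteq> S'" "cox_rel S M u v"
  shows "cox_rel Se Ne (map relabel u) (map relabel v)"
proof -
  have "cox_rel S' M u v" by (rule cox_rel_parabolic[OF _ assms]) auto
  moreover have "cox_rel Se Ne (concat (replicate m ([relabel s] @ [relabel t]))) []"
    if "s \<in> S'" "t \<in> S'" "M s t = enat m" for s t m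
    using that relabel_in relabel_matrix cox_rel.cox_relator[of "[]" Se "[]" "relabel s" "relabel t" Ne m]
    by auto
  ultimately show ?thesis
    using cox_rel_subst[of S' "\<lambda>a. [relabel a]" Se M Ne u v] relabel_in
    by (simp add: concat_map_singleton)
qed

definition tau :: "'a list set \<Rightarrow> 'a option list set" where
  "tau = induced_hom S M S' Se Ne (\<lambda>a. [relabel a])"

lemma tau_class: "set u \<subseteq> S' \<Longrightarrow> tau (cox_class S M u) = cox_class Se Ne (map relabel u)"
  unfolding tau_def
  by (subst induced_hom_class[where g="\<lambda>a. [relabel a]"])
     (auto simp: concat_map_singleton intro: cox_rel_relabel)

lemma tau_hom:
  "tau \<in> hom ((coxeter_group S M)\<lparr>carrier := cox_class S M ` {u. set u \<subseteq> S'}\<rparr>) (coxeter_group Se Ne)"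
  unfolding tau_def
  by (rule induced_hom_hom) (auto simp: concat_map_singleton intro: cox_rel_relabel relabel_in)

definition contraction_word :: "'a option \<Rightarrow> 'a list" where
  "contraction_word x = (case x of None \<Rightarrow> [sp, sm, sp] | Some s \<Rightarrow> [s])"

lemma set_contraction_word: "x \<in> Se \<Longrightarrow> set (contraction_word x) \<subseteq> S"
  unfolding contraction_word_def contract_set_def using sp sm by auto

lemma contraction_word_relator_mixed:
  assumes s: "s \<in> S" "s \<noteq> sp" "s \<noteq> sm" and m: "Ne (Some s) None = enat m"
  shows "cox_rel S M (concat (replicate m [s, sp, sm, sp])) []"
proof (cases "M s sp = 2")
  case True
  then have "M s sm = enat m" using m enat_2_add_diff by (simp add: contract_matrix_simps)
  then show ?thesis using cox_rel_conj_relator[of s S sp sm M m, OF s(1) sp sm True _ diag] by simp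
next
  case False
  then have sm2: "M s sm = 2" using m by (auto simp: contract_matrix_simps split: if_splits)
  then have "M s sp = enat m"
    using m False enat_2_add_diff[of "M s sp"] by (simp add: contract_matrix_simps add.commute)
  then have "cox_rel S M (concat (replicate m [s, sm, sp, sm])) []"
    using cox_rel_conj_relator[of s S sm sp M m, OF s(1) sm sp sm2 _ diag] by simp
  moreover have "cox_rel S M [sp, sm, sp] [sm, sp, sm]"
    using cox_rel_braid[of sp S sm M 3] sp sm edge diag by (simp add: numeral_eq_Suc numeral_eq_enat)
  then have "cox_rel S M (concat (replicate m ([s] @ [sp, sm, sp]))) (concat (replicate m ([s] @ [sm, sp, sm])))"
    using s by (intro cox_rel_replicate cox_rel_append[OF cox_refl]) auto
  ultimately show ?thesis by (auto intro: cox_trans)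
qed

lemma contraction_word_relator:
  assumes x: "x \<in> Se" and y: "y \<in> Se" and m: "Ne x y = enat m"
  shows "cox_rel S M (concat (replicate m (contraction_word x @ contraction_word y))) []"
proof (cases "x = y")
  case True
  then have "m = 1" using m by (cases x) (auto simp: contract_matrix_simps one_enat_def)
  moreover have "rev (contraction_word x) = contraction_word x"
    unfolding contraction_word_def by (cases x) auto
  ultimately show ?thesis
    using cox_rel_append_rev[of "contraction_word x" S M, OF set_contraction_word[OF x] diag] True by simp
next
  case False
  consider s where "x = None" "y = Some s" | s where "x = Some s" "y = None" | s t where "x = Some s" "y = Some t"
    using False by (cases x; cases y) auto
  then show ?thesis
  proof cases
    case (1 s)
    then have "s \<in> S" "s \<noteq> sp" "s \<noteq> sm" using y by (auto simp: contract_set_def)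
    then have "cox_rel S M (concat (replicate m (contraction_word y @ contraction_word x))) []"
      using contraction_word_relator_mixed[of s m] 1 m contract_matrix_sym[OF x y]
      by (simp add: contraction_word_def)
    then show ?thesis
      using cox_rel_replicate_rotate set_contraction_word[OF x] set_contraction_word[OF y] diag by blast
  next
    case (2 s)
    then have "s \<in> S" "s \<noteq> sp" "s \<noteq> sm" using x by (auto simp: contract_set_def)
    then show ?thesis using contraction_word_relator_mixed[of s m] 2 m by (simp add: contraction_word_def)
  next
    case (3 s t)
    then have "M s t = enat m" "s \<in> S" "t \<in> S" using m False x y by (auto simp: contract_matrix_simps contract_set_def)
    then show ?thesis using 3 cox_rel.cox_relator[of "[]" S "[]" s t M m] by (simp add: contraction_word_def)
  qed
qed

definition contraction_hom :: "'a option list set \<Rightarrow> 'a list set" where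
  "contraction_hom = induced_hom Se Ne Se S M contraction_word"

lemma cox_rel_contraction_word:
  "cox_rel Se Ne u v \<Longrightarrow> cox_rel S M (concat (map contraction_word u)) (concat (map contraction_word v))"
  by (rule cox_rel_subst) (use set_contraction_word contraction_word_relator in auto)

lemma contraction_hom_class:
  "set z \<subseteq> Se \<Longrightarrow> contraction_hom (cox_class Se Ne z) = cox_class S M (concat (map contraction_word z))"
  unfolding contraction_hom_def by (rule induced_hom_class) (auto intro: cox_rel_contraction_word)

lemma contraction_hom_hom: "contraction_hom \<in> hom (coxeter_group Se Ne) (coxeter_group S M)"
  using induced_hom_hom[where g=contraction_word and Sa=Se and Sb=Se and Ma=Ne and Sc=S and Mc=M]
    cox_rel_contraction_word set_contraction_word
  unfolding contraction_hom_def coxeter_group_full by auto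

definition chain_word :: "'a list" where
  "chain_word = map j [1..<n+1]"

lemma set_chain_word: "set chain_word \<subseteq> S"
  using j_in_S by (auto simp: chain_word_def)

lemma cox_rel_chain_conj_commuting:
  assumes "a \<in> S" "\<And>k. k \<in> set ks \<Longrightarrow> 1 \<le> k \<and> k \<le> n \<and> M (j k) a = 2"
  shows "cox_rel S M (map j ks @ [a] @ rev (map j ks)) [a]"
  using assms j_in_S diag by (intro cox_rel_conj_commuting) auto

lemma chain_conj_other:
  assumes "a \<in> S" "a \<notin> j ` {0..n}"
  shows "cox_rel S M (chain_word @ [a] @ rev chain_word) [a]"
  unfolding chain_word_def using assms M_j_other by (intro cox_rel_chain_conj_commuting) auto

lemma chain_conj_first: "cox_rel S M (chain_word @ [j 0] @ rev chain_word) [sp, sm, sp]"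
proof -
  have "cox_rel S M (map j [Suc 1..<n+1] @ [j 0] @ rev (map j [Suc 1..<n+1])) [j 0]"
    using j_in_S M_j_j[of _ 0] by (intro cox_rel_chain_conj_commuting) auto
  then have "cox_rel S M ([j 1] @ (map j [Suc 1..<n+1] @ [j 0] @ rev (map j [Suc 1..<n+1])) @ [j 1]) ([j 1] @ [j 0] @ [j 1])"
    using j_in_S n_ge_1 by (intro cox_rel_context) auto
  moreover have "[1..<n+1] = 1 # [Suc 1..<n+1]" using n_ge_1 by (simp add: upt_conv_Cons)
  ultimately show ?thesis using j_0 j_1 by (simp add: chain_word_def)
qed

lemma chain_conj_shift:
  assumes l: "1 \<le> l" "l < n"
  shows "cox_rel S M (chain_word @ [j l] @ rev chain_word) [j (Suc l)]"
proof -
  define A C where "A = map j [1..<l]" and "C = map j [Suc (Suc l)..<n+1]"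
  define x y where "x = j l" and "y = j (Suc l)"
  have xy: "x \<in> S" "y \<in> S" "M x y = 3"
    unfolding x_def y_def using j_in_S M_j_j[of l "Suc l"] l by auto
  have sA: "set A \<subseteq> S" unfolding A_def using j_in_S l by auto
  have "[1..<n+1] = [1..<l] @ l # Suc l # [Suc (Suc l)..<n+1]"
    using l upt_add_eq_append[of 1 l "n + 1 - l"] by (simp add: upt_conv_Cons)
  then have split: "chain_word @ [x] @ rev chain_word = (A @ [x, y]) @ (C @ [x] @ rev C) @ ([y, x] @ rev A)"
    unfolding A_def C_def x_def y_def chain_word_def by simp
  have "cox_rel S M (C @ [x] @ rev C) [x]"
    unfolding C_def x_def using j_in_S M_j_j[of _ l] l by (intro cox_rel_chain_conj_commuting) auto
  then have "cox_rel S M ((A @ [x, y]) @ (C @ [x] @ rev C) @ ([y, x] @ rev A)) ((A @ [x, y]) @ [x] @ ([y, x] @ rev A))"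
    using sA xy by (intro cox_rel_context) auto
  moreover have "cox_rel S M (A @ [x, y, x, y, x] @ rev A) (A @ [y] @ rev A)"
    using sA cox_rel_braid3_conj[of x S y M] xy diag by (intro cox_rel_context) auto
  moreover have "cox_rel S M (A @ [y] @ rev A) [y]"
    unfolding A_def y_def using j_in_S M_j_j[of _ "Suc l"] l by (intro cox_rel_chain_conj_commuting) auto
  ultimately show ?thesis unfolding split x_def[symmetric] y_def[symmetric] by (auto intro: cox_trans)
qed

definition is_contraction_hom :: "('a option list set \<Rightarrow> 'a list set) \<Rightarrow> bool" where
  "is_contraction_hom \<phi> \<longleftrightarrow> \<phi> \<in> hom (coxeter_group Se Ne) (coxeter_group S M)
     \<and> (\<forall>s\<in>S - {sp, sm}. \<phi> (cox_gen Se Ne (Some s)) = cox_gen S M s)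
     \<and> \<phi> (cox_gen Se Ne None)
         = cox_gen S M sp \<otimes>\<^bsub>coxeter_group S M\<^esub> cox_gen S M sm \<otimes>\<^bsub>coxeter_group S M\<^esub> cox_gen S M sp"

lemma cox_gen_sp_sm_sp:
  "cox_gen S M sp \<otimes>\<^bsub>coxeter_group S M\<^esub> cox_gen S M sm \<otimes>\<^bsub>coxeter_group S M\<^esub> cox_gen S M sp
     = cox_class S M [sp, sm, sp]"
  using sp sm by (simp add: cox_gen_def coxeter_group_mult)

lemma is_contraction_hom_contraction_hom: "is_contraction_hom contraction_hom"
  unfolding is_contraction_hom_def cox_gen_sp_sm_sp
  using contraction_hom_hom contraction_hom_class[of "[_]"]
  by (auto simp: cox_gen_def contraction_word_def contract_set_def)

lemma chain_conj_relabel: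
  assumes \<phi>: "is_contraction_hom \<phi>" and a: "a \<in> S'"
  shows "\<phi> (cox_class Se Ne [relabel a]) = cox_class S M (chain_word @ [a] @ rev chain_word)"
proof -
  have gen: "\<phi> (cox_class Se Ne [Some s]) = cox_class S M [s]" if "s \<in> S - {sp, sm}" for s
    using \<phi> that unfolding is_contraction_hom_def by (simp add: cox_gen_def)
  show ?thesis
  proof (rule S'_cases[OF a])
    assume "a = j 0"
    then have "\<phi> (cox_class Se Ne [relabel a]) = cox_class S M [sp, sm, sp]"
      using \<phi> relabel_j[of 0] n_ge_1 unfolding is_contraction_hom_def cox_gen_sp_sm_sp
      by (simp add: cox_gen_def)
    also have "\<dots> = cox_class S M (chain_word @ [a] @ rev chain_word)"
      using cox_class_eq[OF cox_sym[OF chain_conj_first]] \<open>a = j 0\<close> by simp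
    finally show ?thesis .
  next
    fix l assume l: "1 \<le> l" "l < n" "a = j l"
    have "j (Suc l) \<in> S - {sp, sm}"
      using j_in_S j_eq_iff[of "Suc l" 0] j_eq_iff[of "Suc l" 1] l unfolding j_0[symmetric] j_1[symmetric] by auto
    then have "\<phi> (cox_class Se Ne [relabel a]) = cox_class S M [j (Suc l)]"
      using gen relabel_j[of l] l by simp
    also have "\<dots> = cox_class S M (chain_word @ [a] @ rev chain_word)"
      using cox_class_eq[OF cox_sym[OF chain_conj_shift[OF l(1,2)]]] l by simp
    finally show ?thesis .
  next
    assume o: "a \<notin> j ` {0..n}"
    then have "a \<in> S - {sp, sm}" using a n_ge_1 unfolding j_0[symmetric] j_1[symmetric] by force
    moreover have "relabel a = Some a" using o by (intro relabel_other) auto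
    ultimately have "\<phi> (cox_class Se Ne [relabel a]) = cox_class S M [a]"
      using gen by simp
    also have "\<dots> = cox_class S M (chain_word @ [a] @ rev chain_word)"
      using cox_class_eq[OF cox_sym[OF chain_conj_other]] o a by simp
    finally show ?thesis .
  qed
qed

lemma chain_conj_word:
  assumes \<phi>: "is_contraction_hom \<phi>"
  shows "set u \<subseteq> S' \<Longrightarrow> \<phi> (cox_class Se Ne (map relabel u)) = cox_class S M (chain_word @ u @ rev chain_word)"
proof (induction u)
  case Nil
  have "\<phi> (cox_class Se Ne []) = cox_class S M []"
    using \<phi> hom_one coxeter_group_is_group diag contract_matrix_diag
    unfolding is_contraction_hom_def by (metis coxeter_group_one)
  then show ?case
    using cox_rel_append_rev[of chain_word S M, OF set_chain_word diag] by (simp add: cox_class_eq)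
next
  case (Cons a u)
  have a: "a \<in> S'" and u: "set u \<subseteq> S'" using Cons by auto
  have ru: "set (map relabel u) \<subseteq> Se" using u relabel_in by auto
  have "cox_rel S M ((chain_word @ [a]) @ (rev chain_word @ chain_word) @ (u @ rev chain_word))
                   ((chain_word @ [a]) @ [] @ (u @ rev chain_word))"
    using set_chain_word a u
    by (intro cox_rel_context cox_rel_rev_append[of chain_word S M, OF set_chain_word diag]) auto
  then have conj: "cox_rel S M ((chain_word @ [a] @ rev chain_word) @ (chain_word @ u @ rev chain_word))
                               (chain_word @ (a # u) @ rev chain_word)" by simp
  have "\<phi> (cox_class Se Ne (map relabel (a # u)))
      = \<phi> (cox_class Se Ne [relabel a] \<otimes>\<^bsub>coxeter_group Se Ne\<^esub> cox_class Se Ne (map relabel u))"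
    using a ru relabel_in by (subst coxeter_group_mult) auto
  also have "\<dots> = \<phi> (cox_class Se Ne [relabel a]) \<otimes>\<^bsub>coxeter_group S M\<^esub> \<phi> (cox_class Se Ne (map relabel u))"
    using \<phi> a ru relabel_in unfolding is_contraction_hom_def
    by (intro hom_mult) (auto simp: coxeter_group_carrier)
  also have "\<dots> = cox_class S M (chain_word @ [a] @ rev chain_word) \<otimes>\<^bsub>coxeter_group S M\<^esub>
                    cox_class S M (chain_word @ u @ rev chain_word)"
    unfolding chain_conj_relabel[OF \<phi> a] Cons.IH[OF u] ..
  also have "\<dots> = cox_class S M ((chain_word @ [a] @ rev chain_word) @ (chain_word @ u @ rev chain_word))"
    using set_chain_word a u by (intro coxeter_group_mult) auto
  also have "\<dots> = cox_class S M (chain_word @ (a # u) @ rev chain_word)"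
    by (rule cox_class_eq[OF conj])
  finally show ?case .
qed

lemma generate_S': "generate (coxeter_group S M) (cox_gen S M ` S') = cox_class S M ` {u. set u \<subseteq> S'}"
  by (rule generate_cox_gen[of S M, OF diag]) auto

lemma chain_conj_tau:
  assumes \<phi>: "is_contraction_hom \<phi>" and x: "x \<in> generate (coxeter_group S M) (cox_gen S M ` S')"
  shows "cox_class S M chain_word \<otimes>\<^bsub>coxeter_group S M\<^esub> x \<otimes>\<^bsub>coxeter_group S M\<^esub>
           inv\<^bsub>coxeter_group S M\<^esub> cox_class S M chain_word = \<phi> (tau x)"
proof -
  obtain u where u: "x = cox_class S M u" "set u \<subseteq> S'" using x generate_S' by auto
  then have uS: "set u \<subseteq> S" by auto
  have "cox_class S M chain_word \<otimes>\<^bsub>coxeter_group S M\<^esub> x \<otimes>\<^bsub>coxeter_group S M\<^esub>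
          inv\<^bsub>coxeter_group S M\<^esub> cox_class S M chain_word
        = cox_class S M (chain_word @ u @ rev chain_word)"
    unfolding u(1) coxeter_group_inv[of S M, OF diag set_chain_word]
    using set_chain_word uS by (simp add: coxeter_group_mult)
  also have "\<dots> = \<phi> (tau x)"
    unfolding u(1) tau_class[OF u(2)] chain_conj_word[OF \<phi> u(2)] ..
  finally show ?thesis .
qed

lemma tau_inj: "inj_on tau (cox_class S M ` {u. set u \<subseteq> S'})"
proof (rule inj_onI)
  fix x y assume x: "x \<in> cox_class S M ` {u. set u \<subseteq> S'}" and y: "y \<in> cox_class S M ` {u. set u \<subseteq> S'}"
    and eq: "tau x = tau y"
  interpret G: group "coxeter_group S M" by (rule coxeter_group_is_group[of S M, OF diag])
  let ?w = "cox_class S M chain_word"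
  have "?w \<otimes>\<^bsub>coxeter_group S M\<^esub> x \<otimes>\<^bsub>coxeter_group S M\<^esub> inv\<^bsub>coxeter_group S M\<^esub> ?w
      = ?w \<otimes>\<^bsub>coxeter_group S M\<^esub> y \<otimes>\<^bsub>coxeter_group S M\<^esub> inv\<^bsub>coxeter_group S M\<^esub> ?w"
    using chain_conj_tau[OF is_contraction_hom_contraction_hom, of x]
      chain_conj_tau[OF is_contraction_hom_contraction_hom, of y] x y eq
    unfolding generate_S' by simp
  moreover have "?w \<in> carrier (coxeter_group S M)" "x \<in> carrier (coxeter_group S M)" "y \<in> carrier (coxeter_group S M)"
    using set_chain_word x y by (auto simp: coxeter_group_carrier)
  ultimately show "x = y" using G.l_cancel G.r_cancel G.m_closed G.inv_closed by metis
qed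

lemma tau_surj: "tau ` (cox_class S M ` {u. set u \<subseteq> S'}) = carrier (coxeter_group Se Ne)"
proof (intro equalityI subsetI)
  fix z assume "z \<in> tau ` (cox_class S M ` {u. set u \<subseteq> S'})"
  then obtain u where "z = tau (cox_class S M u)" "set u \<subseteq> S'" by auto
  moreover have "set (map relabel u) \<subseteq> Se" using calculation(2) relabel_in by auto
  ultimately show "z \<in> carrier (coxeter_group Se Ne)" by (auto simp: tau_class coxeter_group_carrier)
next
  fix z assume "z \<in> carrier (coxeter_group Se Ne)"
  then obtain zz where zz: "z = cox_class Se Ne zz" "set zz \<subseteq> Se" by (auto simp: coxeter_group_carrier)
  define u where "u = map (inv_into S' relabel) zz"
  have "inv_into S' relabel x \<in> S'" "relabel (inv_into S' relabel x) = x" if "x \<in> Se" for x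
    using that relabel_image inv_into_into[of x relabel S'] f_inv_into_f[of x relabel S'] by auto
  then have u: "set u \<subseteq> S'" and "map relabel u = zz"
    unfolding u_def using zz(2) by (auto intro!: map_idI)
  then have "z = tau (cox_class S M u)" using tau_class[OF u] zz(1) by simp
  then show "z \<in> tau ` (cox_class S M ` {u. set u \<subseteq> S'})" using u by blast
qed

lemma tau_iso:
  "tau \<in> iso ((coxeter_group S M)\<lparr>carrier := generate (coxeter_group S M) (cox_gen S M ` S')\<rparr>)
              (coxeter_group Se Ne)"
  using tau_hom tau_inj tau_surj unfolding iso_def bij_betw_def generate_S' by simp

lemma tau_cox_gen: "a \<in> S' \<Longrightarrow> tau (cox_gen S M a) = cox_gen Se Ne (relabel a)"
  using tau_class[of "[a]"] by (simp add: cox_gen_def)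

end

theorem mainTheorem2:
  fixes S :: "'a set" and M :: "'a \<Rightarrow> 'a \<Rightarrow> enat" and sp sm :: 'a
    and n :: nat and j :: "nat \<Rightarrow> 'a"
  assumes cox: "coxeter_matrix S M"
    and sp: "sp \<in> S" and sm: "sm \<in> S" and neq: "sp \<noteq> sm" and edge: "M sp sm = 3"
    and B: "condition_B S M sp sm n j"
  defines "W \<equiv> coxeter_group S M"
    and "WN \<equiv> coxeter_group (contract_set S sp sm) (contract_matrix M sp sm)"
    and "S' \<equiv> S - {j n}"
    and "w \<equiv> cox_class S M (map j [1..<n+1])"
  shows "(\<exists>\<phi>. \<phi> \<in> hom WN W
            \<and> (\<forall>s\<in>S - {sp, sm}. \<phi> (cox_gen (contract_set S sp sm) (contract_matrix M sp sm) (Some s)) = cox_gen S M s)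
            \<and> \<phi> (cox_gen (contract_set S sp sm) (contract_matrix M sp sm) None)
                = cox_gen S M sp \<otimes>\<^bsub>W\<^esub> cox_gen S M sm \<otimes>\<^bsub>W\<^esub> cox_gen S M sp)
       \<and> (\<exists>\<tau>. \<tau> \<in> iso (W\<lparr>carrier := generate W (cox_gen S M ` S')\<rparr>) WN
            \<and> (\<forall>s\<in>S' - j ` {0..<n}. \<tau> (cox_gen S M s) = cox_gen (contract_set S sp sm) (contract_matrix M sp sm) (Some s))
            \<and> (\<forall>l\<in>{1..<n}. \<tau> (cox_gen S M (j l)) = cox_gen (contract_set S sp sm) (contract_matrix M sp sm) (Some (j (l + 1))))
            \<and> \<tau> (cox_gen S M (j 0)) = cox_gen (contract_set S sp sm) (contract_matrix M sp sm) None
            \<and> (\<forall>\<phi>. \<phi> \<in> hom WN W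
                 \<and> (\<forall>s\<in>S - {sp, sm}. \<phi> (cox_gen (contract_set S sp sm) (contract_matrix M sp sm) (Some s)) = cox_gen S M s)
                 \<and> \<phi> (cox_gen (contract_set S sp sm) (contract_matrix M sp sm) None)
                     = cox_gen S M sp \<otimes>\<^bsub>W\<^esub> cox_gen S M sm \<otimes>\<^bsub>W\<^esub> cox_gen S M sp
                 \<longrightarrow> (\<forall>x\<in>generate W (cox_gen S M ` S'). w \<otimes>\<^bsub>W\<^esub> x \<otimes>\<^bsub>W\<^esub> inv\<^bsub>W\<^esub> w = \<phi> (\<tau> x))))"
proof -
  interpret edge_contraction S M sp sm n j
    using cox sp sm edge B by unfold_locales
  have tau_gens: "\<forall>s\<in>S - {j n} - j ` {0..<n}. tau (cox_gen S M s) = cox_gen Se Ne (Some s)"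
    using tau_cox_gen relabel_other by auto
  have tau_chain: "\<forall>l\<in>{1..<n}. tau (cox_gen S M (j l)) = cox_gen Se Ne (Some (j (l + 1)))"
    using tau_cox_gen relabel_j j_in_S j_eq_iff by auto
  have tau_first: "tau (cox_gen S M (j 0)) = cox_gen Se Ne None"
    using tau_cox_gen relabel_j[of 0] n_ge_1 j_in_S j_eq_iff[of 0 n] by auto
  show ?thesis
    unfolding W_def WN_def S'_def w_def chain_word_def[symmetric] is_contraction_hom_def[symmetric]
    using is_contraction_hom_contraction_hom tau_iso tau_gens tau_chain tau_first chain_conj_tau
    by blast
qed

end
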